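(* Let $k\geq1$ and let $X\subseteq\omega$ be $2$-random. Then for every computable sequence $\langle f_i:i\in\omega\rangle$ of $k$-bounded colorings $f_i:[\omega]^2\to\omega$ there is an $X$-computable sequence $\langle S_i:i\in\omega\rangle$ such that each $S_i$ is an infinite rainbow for $f_i$.
   Context: A coloring $f:[\omega]^n\to\omega$ is $k$-bounded if each color is assigned to at most $k$ many $\vec x\in[\omega]^n$. A set $S$ is a rainbow for $f$ if $f$ is injective on $[S]^n$. A set is $2$-random if it is Martin-Löf random relative to $\emptyset'$. *)

theory Defs
  imports "HOL-Probability.Probability" "HOL-Library.Nat_Bijection"
begin

datatype rf = Zero | Succ | Proj nat | Comp rf "rf list" | Prim rf rf | Mn rf | Orc

inductive evalr :: "(nat \<Rightarrow> bool) \<Rightarrow> rf \<Rightarrow> nat list \<Rightarrow> nat \<Rightarrow> bool" for A where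
  ev_Zero: "evalr A Zero xs 0"
| ev_Succ: "evalr A Succ (x # xs) (Suc x)"
| ev_Proj: "evalr A (Proj i) xs (if i < length xs then xs ! i else 0)"
| ev_Comp: "list_all2 (\<lambda>g y. evalr A g xs y) gs ys \<Longrightarrow> evalr A f ys v \<Longrightarrow> evalr A (Comp f gs) xs v"
| ev_Prim0: "evalr A f xs v \<Longrightarrow> evalr A (Prim f g) (0 # xs) v"
| ev_PrimS: "evalr A (Prim f g) (y # xs) r \<Longrightarrow> evalr A g (r # y # xs) v \<Longrightarrow> evalr A (Prim f g) (Suc y # xs) v"
| ev_Mn: "evalr A f (y # xs) 0 \<Longrightarrow> (\<forall>z<y. \<exists>w. evalr A f (z # xs) w \<and> w \<noteq> 0) \<Longrightarrow> evalr A (Mn f) xs y"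
| ev_Orc: "evalr A Orc (x # xs) (if A x then 1 else 0)"

primrec enc :: "rf \<Rightarrow> nat" where
  "enc Zero = prod_encode (0, 0)"
| "enc Succ = prod_encode (1, 0)"
| "enc (Proj i) = prod_encode (2, i)"
| "enc (Comp f gs) = prod_encode (3, prod_encode (enc f, list_encode (map enc gs)))"
| "enc (Prim f g) = prod_encode (4, prod_encode (enc f, enc g))"
| "enc (Mn f) = prod_encode (5, enc f)"
| "enc Orc = prod_encode (6, 0)"

definition empty_oracle :: "nat \<Rightarrow> bool" where
  "empty_oracle = (\<lambda>_. False)"

definition halting :: "nat \<Rightarrow> bool" where
  "halting n \<longleftrightarrow> (\<exists>p v. enc p = n \<and> evalr empty_oracle p [n] v)"

definition str_code :: "bool list \<Rightarrow> nat" where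
  "str_code \<sigma> = list_encode (map (\<lambda>b. if b then 1 else 0) \<sigma>)"

definition cantor :: "(nat \<Rightarrow> bool) measure" where
  "cantor = PiM UNIV (\<lambda>_. measure_pmf (bernoulli_pmf (1/2)))"

definition cyl :: "bool list \<Rightarrow> (nat \<Rightarrow> bool) set" where
  "cyl \<sigma> = {Y. \<forall>i<length \<sigma>. Y i = \<sigma> ! i}"

text \<open>W is A-c.e. (a set of pairs (n, sigma)); U_n = [W_n] its n-th open class.\<close>
definition ce_rel_strings :: "(nat \<Rightarrow> bool) \<Rightarrow> (nat \<Rightarrow> bool list \<Rightarrow> bool) \<Rightarrow> bool" where
  "ce_rel_strings A W \<longleftrightarrow> (\<exists>p. \<forall>n \<sigma>. W n \<sigma> \<longleftrightarrow> (\<exists>v. evalr A p [n, str_code \<sigma>] v))"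

definition open_class :: "(bool list \<Rightarrow> bool) \<Rightarrow> (nat \<Rightarrow> bool) set" where
  "open_class V = (\<Union>\<sigma>\<in>{\<sigma>. V \<sigma>}. cyl \<sigma>)"

definition mltest :: "(nat \<Rightarrow> bool) \<Rightarrow> (nat \<Rightarrow> bool list \<Rightarrow> bool) \<Rightarrow> bool" where
  "mltest A W \<longleftrightarrow> ce_rel_strings A W \<and>
     (\<forall>n. emeasure cantor (open_class (W n)) \<le> ennreal ((1/2) ^ n))"

definition mlrandom_rel :: "(nat \<Rightarrow> bool) \<Rightarrow> nat set \<Rightarrow> bool" where
  "mlrandom_rel A X \<longleftrightarrow> (\<forall>W. mltest A W \<longrightarrow> \<not> (\<forall>n. (\<lambda>i. i \<in> X) \<in> open_class (W n)))"

definition two_random :: "nat set \<Rightarrow> bool" where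
  "two_random X \<longleftrightarrow> mlrandom_rel halting X"

text \<open>A sequence of colorings of [omega]^2: f i x y is the color of {x,y} for x < y.\<close>
definition computable_coloring_seq :: "(nat \<Rightarrow> nat \<Rightarrow> nat \<Rightarrow> nat) \<Rightarrow> bool" where
  "computable_coloring_seq f \<longleftrightarrow>
     (\<exists>p. \<forall>i x y. x < y \<longrightarrow> evalr empty_oracle p [i, x, y] (f i x y))"

definition k_bounded :: "nat \<Rightarrow> (nat \<Rightarrow> nat \<Rightarrow> nat) \<Rightarrow> bool" where
  "k_bounded k g \<longleftrightarrow> (\<forall>c. finite {(x, y). x < y \<and> g x y = c} \<and> card {(x, y). x < y \<and> g x y = c} \<le> k)"

definition rainbow :: "(nat \<Rightarrow> nat \<Rightarrow> nat) \<Rightarrow> nat set \<Rightarrow> bool" where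
  "rainbow g S \<longleftrightarrow> (\<forall>x y u v. x \<in> S \<longrightarrow> y \<in> S \<longrightarrow> u \<in> S \<longrightarrow> v \<in> S \<longrightarrow> x < y \<longrightarrow> u < v \<longrightarrow>
      g x y = g u v \<longrightarrow> x = u \<and> y = v)"

definition computable_set_seq_in :: "nat set \<Rightarrow> (nat \<Rightarrow> nat set) \<Rightarrow> bool" where
  "computable_set_seq_in X S \<longleftrightarrow>
     (\<exists>p. \<forall>i n. evalr (\<lambda>m. m \<in> X) p [i, n] (if n \<in> S i then 1 else 0))"

end

theory Submission
  imports Defs
begin

text \<open>
  The rainbows are built greedily. Given a k-bounded coloring g and a finite rainbow L, call y
  admissible if y exceeds L and L \<union> {y} is still a rainbow, and call L extendible if infinitely
  many y are admissible. An extendible L has at most |L| k admissible dead ends x (with x # L not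
  extendible): a large admissible y that is admissible for no dead end can only fail for x because
  g x y = g a y for some a in L, and each color class has at most k elements.

  The construction appends, at step n, the r-th admissible element, where r is read from a fresh
  block of bits of X. Block b has c + 2b + k + 1 bits, so the probability that some step of some
  construction picks a dead end is at most 2^-c. Picking a dead end is detected with the help of
  the halting problem, which says whether x # L has admissible elements above a given bound; this
  yields a Martin-Loef test relative to the halting problem. A 2-random X avoids one of its levels
  c, and then all constructions run forever, are X-computable, and enumerate infinite rainbows.
\<close>

lemma list_all2_det:
  assumes "list_all2 (\<lambda>g y. P g y \<and> (\<forall>w. P g w \<longrightarrow> y = w)) gs ys"
    and "list_all2 P gs zs"
  shows "ys = zs"
  using assms
proof (induction gs arbitrary: ys zs)
  case Nil then show ?case by simp
next
  case (Cons g gs)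
  then show ?case by (cases ys; cases zs; auto)
qed

inductive_cases ZeroE: "evalr A Zero xs v"
inductive_cases SuccE: "evalr A Succ xs v"
inductive_cases ProjE: "evalr A (Proj i) xs v"
inductive_cases CompE: "evalr A (Comp f gs) xs v"
inductive_cases Prim0E: "evalr A (Prim f g) (0 # xs) v"
inductive_cases PrimSE: "evalr A (Prim f g) (Suc y # xs) v"
inductive_cases MnE: "evalr A (Mn f) xs v"
inductive_cases OrcE: "evalr A Orc xs v"

lemma evalr_det:
  assumes "evalr A p xs v" shows "evalr A p xs w \<Longrightarrow> v = w"
  using assms
proof (induction arbitrary: w rule: evalr.induct)
  case (ev_Zero xs) from ev_Zero.prems show ?case by (rule ZeroE) simp
next
  case (ev_Succ x xs) from ev_Succ.prems show ?case by (rule SuccE) simp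
next
  case (ev_Proj i xs) from ev_Proj.prems show ?case by (rule ProjE) simp
next
  case (ev_Comp xs gs ys f v)
  from ev_Comp.prems obtain zs where z: "list_all2 (\<lambda>g. evalr A g xs) gs zs" "evalr A f zs w"
    by (auto elim: CompE)
  have "ys = zs"
    using list_all2_det[of "\<lambda>g y. evalr A g xs y" gs ys zs] ev_Comp.IH(1) z(1)
    by (simp add: list_all2_conv_all_nth)
  then show ?case using ev_Comp.IH(2) z(2) by simp
next
  case (ev_Prim0 f xs v g) from ev_Prim0.prems show ?case by (rule Prim0E) (use ev_Prim0.IH in simp)
next
  case (ev_PrimS f g y xs r v)
  from ev_PrimS.prems obtain r' where "evalr A (Prim f g) (y # xs) r'" "evalr A g (r' # y # xs) w"
    by (rule PrimSE) blast
  then show ?case using ev_PrimS.IH by auto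
next
  case (ev_Mn f y xs)
  from ev_Mn.prems have w0: "evalr A f (w # xs) 0" and wl: "\<forall>z<w. \<exists>u. evalr A f (z # xs) u \<and> u \<noteq> 0"
    by (rule MnE, blast)+
  show ?case
  proof (rule ccontr)
    assume "y \<noteq> w"
    then consider "y < w" | "w < y" by linarith
    then show False
    proof cases
      case 1
      then obtain u where "evalr A f (y # xs) u" "u \<noteq> 0" using wl by blast
      then show False using ev_Mn by auto
    next
      case 2
      then obtain u where "evalr A f (w # xs) u" "u \<noteq> 0" "\<forall>w'. evalr A f (w # xs) w' \<longrightarrow> u = w'"
        using ev_Mn by blast
      then show False using w0 by auto
    qed
  qed
next
  case (ev_Orc x xs) from ev_Orc.prems show ?case by (rule OrcE) simp
qed

section \<open>Computability relative to an oracle\<close>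

definition computable :: "(nat \<Rightarrow> bool) \<Rightarrow> nat \<Rightarrow> (nat list \<Rightarrow> nat) \<Rightarrow> bool" where
  "computable A n f \<longleftrightarrow> (\<exists>p. \<forall>xs. length xs = n \<longrightarrow> evalr A p xs (f xs))"

lemma computable_cong: "(\<And>xs. length xs = n \<Longrightarrow> f xs = g xs) \<Longrightarrow> computable A n f \<Longrightarrow> computable A n g"
  unfolding computable_def by metis

lemma computable_const0: "computable A n (\<lambda>_. 0)"
  unfolding computable_def by (auto intro: evalr.intros)

lemma computable_proj: "i < n \<Longrightarrow> computable A n (\<lambda>xs. xs ! i)"
  unfolding computable_def
  by (rule exI[of _ "Proj i"]) (metis evalr.ev_Proj)

lemma computable_list:
  assumes "\<forall>f\<in>set fs. computable A n f"
  shows "\<exists>ps. \<forall>xs. length xs = n \<longrightarrow> list_all2 (\<lambda>g y. evalr A g xs y) ps (map (\<lambda>f. f xs) fs)"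
  using assms
proof (induction fs)
  case Nil then show ?case by auto
next
  case (Cons f fs)
  then obtain ps where ps: "\<forall>xs. length xs = n \<longrightarrow> list_all2 (\<lambda>g y. evalr A g xs y) ps (map (\<lambda>f. f xs) fs)"
    by auto
  from Cons.prems obtain p where "\<forall>xs. length xs = n \<longrightarrow> evalr A p xs (f xs)" unfolding computable_def by auto
  then show ?case using ps by (intro exI[of _ "p # ps"]) auto
qed

lemma computable_comp:
  assumes "computable A (length fs) g" "\<forall>f\<in>set fs. computable A n f"
  shows "computable A n (\<lambda>xs. g (map (\<lambda>f. f xs) fs))"
proof -
  obtain ps where ps: "\<forall>xs. length xs = n \<longrightarrow> list_all2 (\<lambda>g y. evalr A g xs y) ps (map (\<lambda>f. f xs) fs)"
    using computable_list[OF assms(2)] by blast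
  obtain q where q: "\<forall>ys. length ys = length fs \<longrightarrow> evalr A q ys (g ys)" using assms(1) unfolding computable_def by auto
  show ?thesis unfolding computable_def
    by (rule exI[of _ "Comp q ps"]) (auto intro!: evalr.ev_Comp ps[rule_format] q[rule_format])
qed

lemma computable_succ: "computable A n f \<Longrightarrow> computable A n (\<lambda>xs. Suc (f xs))"
proof -
  assume "computable A n f"
  moreover have "computable A 1 (\<lambda>xs. Suc (hd xs))"
    unfolding computable_def by (rule exI[of _ Succ]) (auto simp: length_Suc_conv intro: evalr.intros)
  ultimately show ?thesis using computable_comp[of A "[f]" "\<lambda>xs. Suc (hd xs)" n] by simp
qed

lemma computable_const: "computable A n (\<lambda>_. c)"
  by (induction c) (auto intro: computable_const0 computable_succ)

lemma computable_orc: "computable A n f \<Longrightarrow> computable A n (\<lambda>xs. if A (f xs) then 1 else 0)"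
proof -
  assume "computable A n f"
  moreover have "computable A 1 (\<lambda>xs. if A (hd xs) then 1 else 0)"
    unfolding computable_def
  proof (rule exI[of _ Orc], intro allI impI)
    fix xs :: "nat list" assume "length xs = 1"
    then obtain y where "xs = [y]" by (auto simp: length_Suc_conv)
    then show "evalr A Orc xs (if A (hd xs) then 1 else 0)" using evalr.ev_Orc[of A y "[]"] by simp
  qed
  ultimately show ?thesis using computable_comp[of A "[f]" "\<lambda>xs. if A (hd xs) then 1 else 0" n] by simp
qed

lemma computable_prim_raw:
  assumes "computable A n f" "computable A (Suc (Suc n)) (\<lambda>xs. g (xs!0) (xs!1) (drop 2 xs))"
    and "\<And>ys. H 0 ys = f ys" "\<And>y ys. H (Suc y) ys = g (H y ys) y ys"
  shows "computable A (Suc n) (\<lambda>xs. H (hd xs) (tl xs))"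
proof -
  obtain p where p: "\<forall>xs. length xs = n \<longrightarrow> evalr A p xs (f xs)" using assms(1) unfolding computable_def by auto
  obtain q where q: "\<forall>xs. length xs = Suc (Suc n) \<longrightarrow> evalr A q xs (g (xs!0) (xs!1) (drop 2 xs))"
    using assms(2) unfolding computable_def by auto
  have "evalr A (Prim p q) (y # ys) (H y ys)" if "length ys = n" for y ys
  proof (induction y)
    case 0 then show ?case using p that assms(3) by (auto intro: evalr.intros)
  next
    case (Suc y)
    have "evalr A q (H y ys # y # ys) (g (H y ys) y ys)" using q[rule_format, of "H y ys # y # ys"] that by simp
    then show ?case using Suc assms(4) by (auto intro: evalr.ev_PrimS)
  qed
  then show ?thesis unfolding computable_def
    by (intro exI[of _ "Prim p q"]) (auto simp: length_Suc_conv)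
qed

lemma map_nth_upt: "length xs = n \<Longrightarrow> map (\<lambda>i. xs ! i) [0..<n] = xs"
  using map_nth[of xs] by (simp add: comp_def)

lemma hd_tl1: "1 < length xs \<Longrightarrow> hd (tl xs) = xs ! 1"
  by (cases xs; cases "tl xs") auto
lemma hd_tl2: "2 < length xs \<Longrightarrow> hd (tl (tl xs)) = xs ! 2"
  by (cases xs; cases "tl xs"; cases "tl (tl xs)") (auto simp: numeral_eq_Suc)
lemma hd_tl3: "3 < length xs \<Longrightarrow> hd (tl (tl (tl xs))) = xs ! 3"
  by (cases xs; cases "tl xs"; cases "tl (tl xs)"; cases "tl (tl (tl xs))") (auto simp: numeral_eq_Suc)
lemma hd_tl4: "4 < length xs \<Longrightarrow> hd (tl (tl (tl (tl xs)))) = xs ! 4"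
  by (cases xs; cases "tl xs"; cases "tl (tl xs)"; cases "tl (tl (tl xs))"; cases "tl (tl (tl (tl xs)))") (auto simp: numeral_eq_Suc)

lemma computable_bind:
  assumes "computable A (Suc n) (\<lambda>ys. F (hd ys) (tl ys))" "computable A n e"
  shows "computable A n (\<lambda>xs. F (e xs) xs)"
proof -
  let ?fs = "e # map (\<lambda>i xs. xs ! i) [0..<n]"
  have "\<forall>f\<in>set ?fs. computable A n f" using assms(2) by (auto intro: computable_proj)
  moreover have "length ?fs = Suc n" by simp
  ultimately have "computable A n (\<lambda>xs. (\<lambda>ys. F (hd ys) (tl ys)) (map (\<lambda>f. f xs) ?fs))"
    using computable_comp[of A ?fs "\<lambda>ys. F (hd ys) (tl ys)" n] assms(1) by simp
  then show ?thesis
    by (rule computable_cong[rotated]) (simp add: map_nth_upt[unfolded comp_def] comp_def)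
qed

lemma computable_fix: "computable A n f \<Longrightarrow> n = m \<Longrightarrow> (\<And>xs. length xs = m \<Longrightarrow> f xs = g xs) \<Longrightarrow> computable A m g"
  using computable_cong by blast

lemma computable_comp1: "computable A 1 h \<Longrightarrow> computable A n f \<Longrightarrow> computable A n (\<lambda>xs. h [f xs])"
  using computable_comp[of A "[f]" h n] by simp
lemma computable_comp2: "computable A 2 h \<Longrightarrow> computable A n f \<Longrightarrow> computable A n g \<Longrightarrow> computable A n (\<lambda>xs. h [f xs, g xs])"
  using computable_comp[of A "[f, g]" h n] by (simp add: numeral_2_eq_2)

lemma computable_drop_nth: "m + i < n \<Longrightarrow> computable A n (\<lambda>xs. drop m xs ! i)"
  by (rule computable_cong[OF _ computable_proj[of "m+i"]]) (auto simp: add.commute)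
lemma computable_hd: "0 < n \<Longrightarrow> computable A n (\<lambda>xs. hd xs)"
  by (rule computable_cong[OF _ computable_proj[of 0]]) (auto simp: hd_conv_nth)
lemma computable_tl_nth: "Suc i < n \<Longrightarrow> computable A n (\<lambda>xs. tl xs ! i)"
  by (rule computable_cong[OF _ computable_proj[of "Suc i"]]) (auto simp: nth_tl)
lemma computable_hd_tl: "1 < n \<Longrightarrow> computable A n (\<lambda>xs. hd (tl xs))"
  by (rule computable_cong[OF _ computable_proj[of 1]]) (auto simp: hd_tl1)
lemma computable_tl2_nth: "Suc (Suc i) < n \<Longrightarrow> computable A n (\<lambda>xs. tl (tl xs) ! i)"
  by (rule computable_cong[OF _ computable_proj[of "Suc (Suc i)"]]) (auto simp: nth_tl)
lemma computable_hd_tl2: "2 < n \<Longrightarrow> computable A n (\<lambda>xs. hd (tl (tl xs)))"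
  by (rule computable_cong[OF _ computable_proj[of 2]]) (auto simp: hd_tl2)
lemma computable_tl3_nth: "Suc (Suc (Suc i)) < n \<Longrightarrow> computable A n (\<lambda>xs. tl (tl (tl xs)) ! i)"
  by (rule computable_cong[OF _ computable_proj[of "Suc (Suc (Suc i))"]]) (auto simp: nth_tl)
lemma computable_hd_tl3: "3 < n \<Longrightarrow> computable A n (\<lambda>xs. hd (tl (tl (tl xs))))"
  by (rule computable_cong[OF _ computable_proj[of 3]]) (auto simp: hd_tl3)
lemma computable_tl4_nth: "4 + i < n \<Longrightarrow> computable A n (\<lambda>xs. tl (tl (tl (tl xs))) ! i)"
  by (rule computable_cong[OF _ computable_proj[of "4+i"]]) (auto simp: nth_tl numeral_eq_Suc)
lemma computable_hd_tl4: "4 < n \<Longrightarrow> computable A n (\<lambda>xs. hd (tl (tl (tl (tl xs)))))"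
  by (rule computable_cong[OF _ computable_proj[of 4]]) (auto simp: hd_tl4)

lemma computable_add2: "computable A 2 (\<lambda>xs. xs!0 + xs!1)"
proof -
  have "computable A (Suc 1) (\<lambda>xs. (\<lambda>y ys. y + ys!0) (hd xs) (tl xs))"
    by (rule computable_prim_raw[where f="\<lambda>ys. ys!0" and g="\<lambda>r y ys. Suc r"])
       (auto intro: computable_proj computable_succ)
  then show ?thesis by (rule computable_fix) (auto simp: numeral_2_eq_2 length_Suc_conv)
qed

lemma computable_add: "computable A n f \<Longrightarrow> computable A n g \<Longrightarrow> computable A n (\<lambda>xs. f xs + g xs)"
  using computable_comp2[OF computable_add2] by simp

lemma computable_mult2: "computable A 2 (\<lambda>xs. xs!0 * xs!1)"
proof -
  have "computable A (Suc 1) (\<lambda>xs. (\<lambda>y ys. y * ys!0) (hd xs) (tl xs))"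
    by (rule computable_prim_raw[where f="\<lambda>ys. 0" and g="\<lambda>r y ys. r + ys!0"])
       (auto intro!: computable_const0 computable_add computable_proj computable_drop_nth[of 2 0, simplified])
  then show ?thesis by (rule computable_fix) (auto simp: numeral_2_eq_2 length_Suc_conv)
qed

lemma computable_mult: "computable A n f \<Longrightarrow> computable A n g \<Longrightarrow> computable A n (\<lambda>xs. f xs * g xs)"
  using computable_comp2[OF computable_mult2] by simp

lemma computable_pred1: "computable A 1 (\<lambda>xs. xs!0 - 1)"
proof -
  have "computable A (Suc 0) (\<lambda>xs. (\<lambda>y ys. y - 1) (hd xs) (tl xs))"
    by (rule computable_prim_raw[where f="\<lambda>ys. 0" and g="\<lambda>r y ys. y"])
       (auto intro!: computable_const0 computable_proj)
  then show ?thesis by (rule computable_fix) (auto simp: length_Suc_conv)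
qed

lemma computable_pred: "computable A n f \<Longrightarrow> computable A n (\<lambda>xs. f xs - 1)"
  using computable_comp1[OF computable_pred1] by simp
lemma computable_pred': "computable A n f \<Longrightarrow> computable A n (\<lambda>xs. f xs - Suc 0)"
  using computable_pred by simp

lemma computable_minus2: "computable A 2 (\<lambda>xs. xs!1 - xs!0)"
proof -
  have "computable A (Suc 1) (\<lambda>xs. (\<lambda>y ys. ys!0 - y) (hd xs) (tl xs))"
    by (rule computable_prim_raw[where f="\<lambda>ys. ys!0" and g="\<lambda>r y ys. r - 1"])
       (auto intro!: computable_pred' computable_proj)
  then show ?thesis by (rule computable_fix) (auto simp: numeral_2_eq_2 length_Suc_conv)
qed

lemma computable_minus: assumes "computable A n f" "computable A n g" shows "computable A n (\<lambda>xs. f xs - g xs)"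
  using computable_comp2[OF computable_minus2 assms(2) assms(1)] by simp

lemma computable_pow2: "computable A 2 (\<lambda>xs. xs!1 ^ xs!0)"
proof -
  have "computable A (Suc 1) (\<lambda>xs. (\<lambda>y ys. ys!0 ^ y) (hd xs) (tl xs))"
    by (rule computable_prim_raw[where f="\<lambda>ys. 1" and g="\<lambda>r y ys. r * ys!0"])
       (auto intro!: computable_const computable_mult computable_proj computable_drop_nth[of 2 0, simplified])
  then show ?thesis by (rule computable_fix) (auto simp: numeral_2_eq_2 length_Suc_conv)
qed

lemma computable_pow: assumes "computable A n f" "computable A n g" shows "computable A n (\<lambda>xs. f xs ^ g xs)"
  using computable_comp2[OF computable_pow2 assms(2) assms(1)] by simp

lemma computable_sum0:
  assumes "computable A (Suc n) (\<lambda>ys. F (hd ys) (tl ys))"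
  shows "computable A (Suc n) (\<lambda>ys. (\<Sum>j<hd ys. F j (tl ys)))"
proof -
  have s: "computable A (Suc (Suc n)) (\<lambda>xs. F (xs!1) (drop 2 xs))"
  proof -
    let ?fs = "(\<lambda>xs. xs ! 1) # map (\<lambda>i xs. xs ! (i + 2)) [0..<n]"
    have "computable A (Suc (Suc n)) (\<lambda>xs. (\<lambda>ys. F (hd ys) (tl ys)) (map (\<lambda>f. f xs) ?fs))"
      by (rule computable_comp) (use assms in \<open>auto intro!: computable_proj\<close>)
    note h = this
    have eq: "map (\<lambda>i. xs ! (i + 2)) [0..<n] = drop 2 xs" if "length xs = Suc (Suc n)" for xs :: "nat list"
      using that by (simp add: list_eq_iff_nth_eq)
    show ?thesis by (rule computable_fix[OF h]) (use eq in \<open>auto simp: comp_def\<close>)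
  qed
  show ?thesis
    by (rule computable_prim_raw[where f="\<lambda>ys. 0" and g="\<lambda>r y ys. r + F y ys"])
       (auto intro!: computable_const0 computable_add computable_proj s[simplified])
qed

lemma computable_sum:
  assumes "computable A (Suc n) (\<lambda>ys. F (hd ys) (tl ys))" "computable A n e"
  shows "computable A n (\<lambda>xs. (\<Sum>j<e xs. F j xs))"
  using computable_bind[OF computable_sum0[OF assms(1)] assms(2)] .

definition decidable :: "(nat \<Rightarrow> bool) \<Rightarrow> nat \<Rightarrow> (nat list \<Rightarrow> bool) \<Rightarrow> bool" where
  "decidable A n P \<longleftrightarrow> computable A n (\<lambda>xs. of_bool (P xs))"

lemma decidable_eq: "computable A n f \<Longrightarrow> computable A n g \<Longrightarrow> decidable A n (\<lambda>xs. f xs = g xs)"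
  unfolding decidable_def
  by (rule computable_cong[of _ "\<lambda>xs. 1 - ((f xs - g xs) + (g xs - f xs))"])
     (auto simp: of_bool_def intro!: computable_minus computable_add computable_const)

lemma decidable_less: "computable A n f \<Longrightarrow> computable A n g \<Longrightarrow> decidable A n (\<lambda>xs. f xs < g xs)"
  unfolding decidable_def
  by (rule computable_cong[of _ "\<lambda>xs. 1 - (1 - (g xs - f xs))"])
     (auto simp: of_bool_def intro!: computable_minus computable_add computable_const)

lemma decidable_le: "computable A n f \<Longrightarrow> computable A n g \<Longrightarrow> decidable A n (\<lambda>xs. f xs \<le> g xs)"
  unfolding decidable_def
  by (rule computable_cong[of _ "\<lambda>xs. 1 - (f xs - g xs)"])
     (auto simp: of_bool_def intro!: computable_minus computable_add computable_const)

lemma decidable_conj: "decidable A n P \<Longrightarrow> decidable A n Q \<Longrightarrow> decidable A n (\<lambda>xs. P xs \<and> Q xs)"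
  unfolding decidable_def
  by (rule computable_cong[of _ "\<lambda>xs. of_bool (P xs) * of_bool (Q xs)"]) (auto simp: of_bool_def intro!: computable_mult)

lemma decidable_not: "decidable A n P \<Longrightarrow> decidable A n (\<lambda>xs. \<not> P xs)"
  unfolding decidable_def
  by (rule computable_cong[of _ "\<lambda>xs. 1 - of_bool (P xs)"]) (auto simp: of_bool_def intro!: computable_minus computable_const)

lemma decidable_disj: "decidable A n P \<Longrightarrow> decidable A n Q \<Longrightarrow> decidable A n (\<lambda>xs. P xs \<or> Q xs)"
  unfolding decidable_def
  by (rule computable_cong[of _ "\<lambda>xs. 1 - (1 - of_bool (P xs)) * (1 - of_bool (Q xs))"])
     (auto simp: of_bool_def intro!: computable_mult computable_minus computable_const)

lemma decidable_imp: "decidable A n P \<Longrightarrow> decidable A n Q \<Longrightarrow> decidable A n (\<lambda>xs. P xs \<longrightarrow> Q xs)"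
  unfolding decidable_def
  by (rule computable_cong[of _ "\<lambda>xs. 1 - of_bool (P xs) * (1 - of_bool (Q xs))"])
     (auto simp: of_bool_def intro!: computable_mult computable_minus computable_const)

lemma decidable_iff: assumes "decidable A n P" "decidable A n Q" shows "decidable A n (\<lambda>xs. P xs \<longleftrightarrow> Q xs)"
proof -
  have "decidable A n (\<lambda>xs. (P xs \<and> Q xs) \<or> (\<not> P xs \<and> \<not> Q xs))"
    by (intro decidable_disj decidable_conj decidable_not assms)
  then show ?thesis unfolding decidable_def by (rule computable_cong[rotated]) (auto simp: of_bool_def)
qed

lemma decidable_const: "decidable A n (\<lambda>xs. b)"
  unfolding decidable_def by (rule computable_const)

lemma decidable_orc: "computable A n f \<Longrightarrow> decidable A n (\<lambda>xs. A (f xs))"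
  unfolding decidable_def of_bool_def by (rule computable_orc)

lemma computable_if: "decidable A n P \<Longrightarrow> computable A n f \<Longrightarrow> computable A n g \<Longrightarrow> computable A n (\<lambda>xs. if P xs then f xs else g xs)"
  unfolding decidable_def
  by (rule computable_cong[of _ "\<lambda>xs. of_bool (P xs) * f xs + (1 - of_bool (P xs)) * g xs"])
     (auto simp: of_bool_def intro!: computable_mult computable_minus computable_const computable_add)

lemma computable_of_bool: "decidable A n P \<Longrightarrow> computable A n (\<lambda>xs. of_bool (P xs))"
  unfolding decidable_def .

lemma decidable_ball:
  assumes "decidable A (Suc n) (\<lambda>ys. P (hd ys) (tl ys))" "computable A n e"
  shows "decidable A n (\<lambda>xs. \<forall>j<e xs. P j xs)"
proof -
  have "computable A n (\<lambda>xs. \<Sum>j<e xs. of_bool (\<not> P j xs))"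
    using decidable_not[OF assms(1)] assms(2) unfolding decidable_def by (rule computable_sum)
  then have "decidable A n (\<lambda>xs. (\<Sum>j<e xs. of_bool (\<not> P j xs)) = (0::nat))"
    by (rule decidable_eq[OF _ computable_const])
  then show ?thesis unfolding decidable_def by (rule computable_cong[rotated]) auto
qed

lemma decidable_bex:
  assumes "decidable A (Suc n) (\<lambda>ys. P (hd ys) (tl ys))" "computable A n e"
  shows "decidable A n (\<lambda>xs. \<exists>j<e xs. P j xs)"
proof -
  have "decidable A n (\<lambda>xs. \<not> (\<forall>j<e xs. \<not> P j xs))"
    by (intro decidable_not decidable_ball[OF decidable_not] assms)
  then show ?thesis unfolding decidable_def by (rule computable_cong[rotated]) auto
qed

definition bounded_least :: "nat \<Rightarrow> (nat \<Rightarrow> bool) \<Rightarrow> nat" where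
  "bounded_least e P = (if \<exists>j<e. P j then LEAST j. P j else e)"

lemma bounded_least_eq_sum: "bounded_least e P = (\<Sum>j<e. of_bool (\<forall>i<Suc j. \<not> P i))"
proof -
  have "j < e \<and> (\<forall>i\<le>j. \<not> P i) \<longleftrightarrow> j < bounded_least e P" for j
  proof (cases "\<exists>j<e. P j")
    case True
    then obtain w where w: "w < e" "P w" by blast
    have le: "(LEAST j. P j) \<le> w" by (rule Least_le) (fact w(2))
    have P: "P (LEAST j. P j)" by (rule LeastI) (fact w(2))
    have "j < e \<and> (\<forall>i\<le>j. \<not> P i) \<longleftrightarrow> j < (LEAST j. P j)"
    proof
      assume "j < e \<and> (\<forall>i\<le>j. \<not> P i)"
      then show "j < (LEAST j. P j)" using P not_le by blast
    next
      assume j: "j < (LEAST j. P j)"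
      have "\<not> P i" if "i \<le> j" for i by (rule not_less_Least) (use that j in linarith)
      then show "j < e \<and> (\<forall>i\<le>j. \<not> P i)" using j le w(1) by simp
    qed
    then show ?thesis using True by (simp add: bounded_least_def)
  qed (auto simp: bounded_least_def)
  then have "{..<e} \<inter> {j. \<forall>i<Suc j. \<not> P i} = {..<bounded_least e P}"
    by (auto simp: less_Suc_eq_le)
  then show ?thesis by simp
qed
lemma computable_sel:
  assumes "computable A (Suc n) (\<lambda>ys. F (hd ys) (tl ys))" "j < m" "d + n \<le> m"
  shows "computable A m (\<lambda>xs. F (xs ! j) (take n (drop d xs)))"
proof -
  let ?fs = "(\<lambda>xs. xs ! j) # map (\<lambda>i xs. xs ! (d + i)) [0..<n]"
  have h: "computable A m (\<lambda>xs. (\<lambda>ys. F (hd ys) (tl ys)) (map (\<lambda>f. f xs) ?fs))"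
    by (rule computable_comp) (use assms in \<open>auto intro!: computable_proj\<close>)
  have eq: "map (\<lambda>i. xs ! (d + i)) [0..<n] = take n (drop d xs)" if "length xs = m" for xs :: "nat list"
    using that assms by (simp add: list_eq_iff_nth_eq)
  show ?thesis by (rule computable_fix[OF h]) (use eq in \<open>auto simp: comp_def\<close>)
qed

lemma computable_weak:
  assumes "computable A (Suc n) (\<lambda>ys. F (hd ys) (tl ys))"
  shows "computable A (Suc (Suc n)) (\<lambda>ys. F (hd ys) (tl (tl ys)))"
proof -
  have "computable A (Suc (Suc n)) (\<lambda>xs. F (xs ! 0) (take n (drop 2 xs)))"
    by (rule computable_sel[OF assms]) auto
  then show ?thesis
    by (rule computable_fix) (auto simp: hd_conv_nth drop_Suc[symmetric] length_Suc_conv)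
qed

lemma decidable_weak:
  assumes "decidable A (Suc n) (\<lambda>ys. P (hd ys) (tl ys))"
  shows "decidable A (Suc (Suc n)) (\<lambda>ys. P (hd ys) (tl (tl ys)))"
  using computable_weak[of A n "\<lambda>a b. of_bool (P a b)"] assms unfolding decidable_def by simp

lemma computable_bounded_least:
  assumes "decidable A (Suc n) (\<lambda>ys. P (hd ys) (tl ys))" "computable A n e"
  shows "computable A n (\<lambda>xs. bounded_least (e xs) (\<lambda>j. P j xs))"
proof -
  have "decidable A (Suc (Suc n)) (\<lambda>ys. \<not> P (hd ys) (tl (tl ys)))"
    by (rule decidable_not, rule decidable_weak[OF assms(1)])
  then have "decidable A (Suc n) (\<lambda>ys. \<forall>i<Suc (hd ys). \<not> P i (tl ys))"
    by (intro decidable_ball) (auto intro!: computable_succ computable_hd)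
  then show ?thesis unfolding bounded_least_eq_sum decidable_def
    by (intro computable_sum assms) auto
qed

lemmas computable_intros = computable_const computable_proj computable_drop_nth computable_hd computable_tl_nth computable_hd_tl computable_tl2_nth computable_hd_tl2
  computable_tl3_nth computable_hd_tl3 computable_tl4_nth computable_hd_tl4
  computable_add computable_mult computable_minus computable_pow computable_succ computable_sum decidable_eq decidable_less decidable_le decidable_conj decidable_not
  decidable_disj decidable_imp decidable_iff decidable_const decidable_orc computable_if computable_of_bool decidable_ball decidable_bex computable_bounded_least

lemma computable_tl1: assumes "computable A n f" shows "computable A (Suc n) (\<lambda>xs. f (tl xs))"
proof -
  let ?fs = "map (\<lambda>i xs. xs ! (Suc i)) [0..<n]"
  have h: "computable A (Suc n) (\<lambda>xs. f (map (\<lambda>g. g xs) ?fs))"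
    by (rule computable_comp) (use assms in \<open>auto intro!: computable_proj\<close>)
  have eq: "map (\<lambda>i. xs ! Suc i) [0..<n] = tl xs" if "length xs = Suc n" for xs :: "nat list"
    using that by (simp add: list_eq_iff_nth_eq nth_tl)
  show ?thesis by (rule computable_fix[OF h]) (use eq in \<open>auto simp: comp_def\<close>)
qed

lemma computable_tl2: "computable A n f \<Longrightarrow> computable A (Suc (Suc n)) (\<lambda>xs. f (tl (tl xs)))"
  using computable_tl1[OF computable_tl1[of A n f]] by simp
lemma computable_tl3: "computable A n f \<Longrightarrow> computable A (Suc (Suc (Suc n))) (\<lambda>xs. f (tl (tl (tl xs))))"
  using computable_tl1[OF computable_tl2[of A n f]] by simp
lemma computable_tl4: "computable A n f \<Longrightarrow> computable A (Suc (Suc (Suc (Suc n)))) (\<lambda>xs. f (tl (tl (tl (tl xs)))))"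
  using computable_tl1[OF computable_tl3[of A n f]] by simp

lemmas computable_intros2 = computable_intros computable_tl1 computable_tl2 computable_tl3 computable_tl4

lemma triangle_sum: "triangle n = (\<Sum>j<Suc n. j)"
  by (induction n) auto

lemma computable_prod_encode: "computable A n f \<Longrightarrow> computable A n g \<Longrightarrow> computable A n (\<lambda>xs. prod_encode (f xs, g xs))"
  unfolding prod_encode_def triangle_sum
  by (auto intro!: computable_intros)

definition pair_fst :: "nat \<Rightarrow> nat" where "pair_fst z = fst (prod_decode z)"
definition pair_snd :: "nat \<Rightarrow> nat" where "pair_snd z = snd (prod_decode z)"

lemma pair_fst_encode[simp]: "pair_fst (prod_encode (a, b)) = a" by (simp add: pair_fst_def)
lemma pair_snd_encode[simp]: "pair_snd (prod_encode (a, b)) = b" by (simp add: pair_snd_def)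

lemma pair_fst_eq_bounded_least: "pair_fst z = bounded_least (Suc z) (\<lambda>a. \<exists>b<Suc z. prod_encode (a, b) = z)"
proof -
  obtain a b where ab: "prod_decode z = (a, b)" by (cases "prod_decode z")
  then have z: "z = prod_encode (a, b)" by (metis prod_decode_inverse)
  have "(LEAST a'. \<exists>b'<Suc z. prod_encode (a', b') = z) = a"
    by (rule Least_equality) (use z le_prod_encode_2[of b a] in \<open>auto simp: le_imp_less_Suc\<close>)
  moreover have "\<exists>j<Suc z. \<exists>b'<Suc z. prod_encode (j, b') = z"
    using z le_prod_encode_1[of a b] le_prod_encode_2[of b a] by (auto intro!: exI[of _ a] exI[of _ b])
  ultimately show ?thesis by (simp add: bounded_least_def pair_fst_def ab)
qed

lemma pair_snd_eq_bounded_least: "pair_snd z = bounded_least (Suc z) (\<lambda>b. \<exists>a<Suc z. prod_encode (a, b) = z)"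
proof -
  obtain a b where ab: "prod_decode z = (a, b)" by (cases "prod_decode z")
  then have z: "z = prod_encode (a, b)" by (metis prod_decode_inverse)
  have "(LEAST b'. \<exists>a'<Suc z. prod_encode (a', b') = z) = b"
    by (rule Least_equality) (use z le_prod_encode_1[of a b] in \<open>auto simp: le_imp_less_Suc\<close>)
  moreover have "\<exists>j<Suc z. \<exists>a'<Suc z. prod_encode (a', j) = z"
    using z le_prod_encode_1[of a b] le_prod_encode_2[of b a] by (auto intro!: exI[of _ a] exI[of _ b])
  ultimately show ?thesis by (simp add: bounded_least_def pair_snd_def ab)
qed

lemma computable_pair_fst: "computable A n f \<Longrightarrow> computable A n (\<lambda>xs. pair_fst (f xs))"
  unfolding pair_fst_eq_bounded_least by (auto intro!: computable_intros2 computable_prod_encode)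

lemma computable_pair_snd: "computable A n f \<Longrightarrow> computable A n (\<lambda>xs. pair_snd (f xs))"
  unfolding pair_snd_eq_bounded_least by (auto intro!: computable_intros2 computable_prod_encode)

lemma computable_primrec:
  assumes "computable A n f" "computable A (Suc (Suc n)) (\<lambda>xs. g (hd xs) (hd (tl xs)) (tl (tl xs)))"
    and "\<And>ys. H 0 ys = f ys" "\<And>y ys. H (Suc y) ys = g (H y ys) y ys"
  shows "computable A (Suc n) (\<lambda>xs. H (hd xs) (tl xs))"
proof -
  have "computable A (Suc (Suc n)) (\<lambda>xs. g (xs ! 0) (xs ! 1) (drop 2 xs))"
    by (rule computable_fix[OF assms(2)]) (auto simp: hd_tl1 numeral_2_eq_2 drop_Suc length_Suc_conv)
  then show ?thesis using computable_prim_raw[of A n f g H] assms(1,3,4) by blast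
qed

definition code_tl :: "nat \<Rightarrow> nat" where "code_tl z = pair_snd (z - 1)"

lemma list_decode_code_tl: "list_decode (code_tl z) = tl (list_decode z)"
proof (cases z)
  case 0 then show ?thesis by (simp add: code_tl_def pair_snd_def prod_decode_def prod_decode_aux.simps)
next
  case (Suc m) then show ?thesis by (cases "prod_decode m") (simp add: code_tl_def pair_snd_def)
qed

definition code_drop :: "nat \<Rightarrow> nat \<Rightarrow> nat" where "code_drop i z = (code_tl ^^ i) z"

lemma list_decode_code_drop: "list_decode (code_drop i z) = drop i (list_decode z)"
  by (induction i) (auto simp: code_drop_def list_decode_code_tl drop_Suc tl_drop)

lemma computable_code_tl: "computable A n f \<Longrightarrow> computable A n (\<lambda>xs. code_tl (f xs))"
  unfolding code_tl_def by (auto intro!: computable_intros2 computable_pair_snd)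

lemma computable_code_drop_aux: "computable A (Suc 1) (\<lambda>xs. code_drop (hd xs) (tl xs ! 0))"
proof -
  have "computable A (Suc 1) (\<lambda>xs. (\<lambda>i ys. code_drop i (ys!0)) (hd xs) (tl xs))"
    by (rule computable_primrec[where f="\<lambda>ys. ys!0" and g="\<lambda>r y ys. code_tl r"])
       (auto intro!: computable_intros2 computable_code_tl simp: code_drop_def)
  then show ?thesis by simp
qed

lemma computable_code_drop: "computable A n e \<Longrightarrow> computable A n f \<Longrightarrow> computable A n (\<lambda>xs. code_drop (e xs) (f xs))"
proof -
  assume "computable A n e" "computable A n f"
  moreover have "computable A 2 (\<lambda>xs. code_drop (hd xs) (tl xs ! 0))" using computable_code_drop_aux by (simp add: numeral_2_eq_2)
  ultimately show ?thesis using computable_comp2[of A "\<lambda>xs. code_drop (hd xs) (tl xs ! 0)" n e f] by simp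
qed

definition code_nth :: "nat \<Rightarrow> nat \<Rightarrow> nat" where "code_nth z i = pair_fst (code_drop i z - 1)"
definition code_length :: "nat \<Rightarrow> nat" where "code_length z = bounded_least (Suc z) (\<lambda>i. code_drop i z = 0)"

lemma code_nth_eq: "i < length (list_decode z) \<Longrightarrow> code_nth z i = list_decode z ! i"
proof -
  assume i: "i < length (list_decode z)"
  let ?w = "code_drop i z"
  have d: "list_decode ?w = list_decode z ! i # drop (Suc i) (list_decode z)"
    using i by (simp add: list_decode_code_drop Cons_nth_drop_Suc)
  then obtain m where m: "?w = Suc m" by (cases ?w) auto
  then show ?thesis using d by (cases "prod_decode m") (auto simp: code_nth_def pair_fst_def)
qed

lemma length_le_list_encode: "length L \<le> list_encode L"
proof (induction L)
  case (Cons x L) then show ?case using le_prod_encode_2[of "list_encode L" x] by simp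
qed simp

lemma code_length_eq: "code_length z = length (list_decode z)"
proof -
  let ?L = "list_decode z"
  have iff: "code_drop i z = 0 \<longleftrightarrow> length ?L \<le> i" for i
  proof -
    have "code_drop i z = 0 \<longleftrightarrow> list_decode (code_drop i z) = list_decode 0"
      by (simp only: list_decode_eq)
    also have "\<dots> \<longleftrightarrow> length ?L \<le> i" by (simp add: list_decode_code_drop)
    finally show ?thesis .
  qed
  have le: "length ?L \<le> z" using length_le_list_encode[of ?L] by simp
  have "(LEAST i. code_drop i z = 0) = length ?L"
    by (rule Least_equality) (auto simp: iff)
  then show ?thesis unfolding code_length_def bounded_least_def using le iff by auto
qed

lemma computable_code_nth: "computable A n f \<Longrightarrow> computable A n g \<Longrightarrow> computable A n (\<lambda>xs. code_nth (f xs) (g xs))"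
  unfolding code_nth_def by (auto intro!: computable_intros2 computable_pair_fst computable_code_drop)

lemma computable_code_length: "computable A n f \<Longrightarrow> computable A n (\<lambda>xs. code_length (f xs))"
  unfolding code_length_def by (auto intro!: computable_intros2 computable_code_drop)

lemmas computable_intros3 = computable_intros2 computable_prod_encode computable_pair_fst computable_pair_snd computable_code_tl computable_code_drop computable_code_nth computable_code_length

lemma computable_comp3: "computable A 3 h \<Longrightarrow> computable A n f \<Longrightarrow> computable A n g \<Longrightarrow> computable A n e \<Longrightarrow> computable A n (\<lambda>xs. h [f xs, g xs, e xs])"
  using computable_comp[of A "[f, g, e]" h n] by (simp add: numeral_3_eq_3)

lemma computable_apply3:
  assumes "computable A 3 (\<lambda>xs. G (xs!0) (xs!1) (xs!2))"
  shows "computable A n e1 \<Longrightarrow> computable A n e2 \<Longrightarrow> computable A n e3 \<Longrightarrow> computable A n (\<lambda>xs. G (e1 xs) (e2 xs) (e3 xs))"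
  using computable_comp3[OF assms] by simp

lemma computable_apply2:
  assumes "computable A 2 (\<lambda>xs. G (xs!0) (xs!1))"
  shows "computable A n e1 \<Longrightarrow> computable A n e2 \<Longrightarrow> computable A n (\<lambda>xs. G (e1 xs) (e2 xs))"
  using computable_comp2[OF assms] by simp

section \<open>Rainbow extensions of a finite set\<close>

definition admissible :: "(nat \<Rightarrow> nat \<Rightarrow> nat) \<Rightarrow> nat list \<Rightarrow> nat \<Rightarrow> bool" where
  "admissible g L y \<longleftrightarrow> (\<forall>a\<in>set L. a < y) \<and> (\<forall>a\<in>set L. \<forall>a'\<in>set L. a \<noteq> a' \<longrightarrow> g a y \<noteq> g a' y) \<and>
     (\<forall>a\<in>set L. \<forall>a1\<in>set L. \<forall>a2\<in>set L. a1 < a2 \<longrightarrow> g a y \<noteq> g a1 a2)"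

definition extendible :: "(nat \<Rightarrow> nat \<Rightarrow> nat) \<Rightarrow> nat list \<Rightarrow> bool" where
  "extendible g L \<longleftrightarrow> infinite {y. admissible g L y}"

definition dead_end :: "(nat \<Rightarrow> nat \<Rightarrow> nat) \<Rightarrow> nat list \<Rightarrow> nat \<Rightarrow> bool" where
  "dead_end g L x \<longleftrightarrow> admissible g L x \<and> \<not> extendible g (x # L)"

lemma extendible_Nil: "extendible g []"
  unfolding extendible_def admissible_def by simp

lemma rainbow_insert_admissible:
  assumes "rainbow g (set L)" "admissible g L y"
  shows "rainbow g (set (y # L))"
  unfolding rainbow_def
proof (intro allI impI)
  fix a b u v assume h: "a \<in> set (y # L)" "b \<in> set (y # L)" "u \<in> set (y # L)" "v \<in> set (y # L)"
    "a < b" "u < v" "g a b = g u v"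
  have lt: "\<forall>a\<in>set L. a < y" using assms(2) admissible_def by blast
  have d1: "\<forall>a\<in>set L. \<forall>a'\<in>set L. a \<noteq> a' \<longrightarrow> g a y \<noteq> g a' y" using assms(2) admissible_def by blast
  have d2: "\<forall>a\<in>set L. \<forall>a1\<in>set L. \<forall>a2\<in>set L. a1 < a2 \<longrightarrow> g a y \<noteq> g a1 a2" using assms(2) admissible_def by blast
  consider "b = y" "v = y" | "b = y" "v \<noteq> y" | "b \<noteq> y" "v = y" | "b \<noteq> y" "v \<noteq> y" by blast
  then show "a = u \<and> b = v"
  proof cases
    case 1
    then have "a \<in> set L" "u \<in> set L" using h lt by auto
    then show ?thesis using 1 h d1 by blast
  next
    case 2
    then have "a \<in> set L" "u \<in> set L" "v \<in> set L" using h lt by auto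
    then show ?thesis using 2 h d2 by metis
  next
    case 3
    then have "a \<in> set L" "u \<in> set L" "b \<in> set L" using h lt by auto
    then show ?thesis using 3 h d2 by metis
  next
    case 4
    then have "a \<in> set L" "u \<in> set L" "b \<in> set L" "v \<in> set L" using h lt by auto
    then show ?thesis using h assms(1) unfolding rainbow_def by blast
  qed
qed

lemma admissible_Cons:
  assumes "admissible g L y" "x < y" "\<forall>a\<in>set L. g x y \<noteq> g a y"
    and "\<forall>a\<in>set (x # L). \<forall>a1\<in>set (x # L). \<forall>a2\<in>set (x # L). a1 < a2 \<longrightarrow> g a y \<noteq> g a1 a2"
  shows "admissible g (x # L) y"
  unfolding admissible_def
proof (intro conjI ballI impI)
  fix a a' assume a: "a \<in> set (x # L)" "a' \<in> set (x # L)" "a \<noteq> a'"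
  then consider "a = x" "a' \<in> set L" | "a' = x" "a \<in> set L" | "a \<in> set L" "a' \<in> set L" by auto
  then show "g a y \<noteq> g a' y"
    using assms(1,3) a(3) unfolding admissible_def by cases metis+
qed (use assms in \<open>auto simp: admissible_def\<close>)

lemma k_bounded_finite: "k_bounded k g \<Longrightarrow> finite {(x, y). x < y \<and> g x y = c}"
  unfolding k_bounded_def by blast

lemma k_bounded_card_column:
  assumes "k_bounded k g"
  shows "card {x. x < y \<and> g x y = c} \<le> k"
proof -
  have "card {x. x < y \<and> g x y = c} \<le> card {(x, y'). x < y' \<and> g x y' = c}"
    by (rule card_inj_on_le[of "\<lambda>x. (x, y)"]) (auto intro: inj_onI k_bounded_finite[OF assms])
  also have "\<dots> \<le> k" using assms unfolding k_bounded_def by blast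
  finally show ?thesis .
qed

lemma extendible_admissible_avoiding:
  assumes kb: "k_bounded k g" and "extendible g L" "finite B" "finite C"
  obtains y where "admissible g L y" "\<forall>b\<in>B. b < y" "\<forall>a<y. g a y \<notin> C"
proof -
  define P where "P = (\<Union>c\<in>C. {(x, y). x < y \<and> g x y = c})"
  have "finite ({..Max B} \<union> snd ` P)"
    unfolding P_def using assms(4) k_bounded_finite[OF kb] by blast
  then have "infinite ({y. admissible g L y} - ({..Max B} \<union> snd ` P))"
    using assms(2) unfolding extendible_def by (rule Diff_infinite_finite)
  then obtain y where y: "admissible g L y" "y \<notin> {..Max B} \<union> snd ` P"
    by (metis (no_types, lifting) DiffE infinite_imp_nonempty ex_in_conv mem_Collect_eq)
  have "g a y \<notin> C" if "a < y" for a
    using y(2) that unfolding P_def by (auto simp: image_iff)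
  moreover have "b < y" if "b \<in> B" for b
    using Max_ge[OF assms(3) that] y(2) by simp
  ultimately show ?thesis using that y(1) by blast
qed

lemma card_dead_ends_le:
  assumes kb: "k_bounded k g" and ext: "extendible g L"
    and T: "finite T" "T \<subseteq> {x. dead_end g L x}"
  shows "card T \<le> length L * k"
proof -
  define C where "C = (\<lambda>(a1, a2). g a1 a2) ` ((set L \<union> T) \<times> (set L \<union> T))"
  define U where "U = (\<Union>x\<in>T. {y. admissible g (x # L) y})"
  have "finite U" unfolding U_def using T by (auto simp: dead_end_def extendible_def)
  moreover have "finite C" unfolding C_def using T(1) by simp
  ultimately obtain y where y: "admissible g L y" "\<forall>b\<in>T \<union> U. b < y" "\<forall>a<y. g a y \<notin> C"
    using extendible_admissible_avoiding[OF kb ext, of "T \<union> U" C] T(1) by blast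
  have "\<exists>a\<in>set L. g x y = g a y" if x: "x \<in> T" for x
  proof (rule ccontr)
    assume "\<not> (\<exists>a\<in>set L. g x y = g a y)"
    moreover have below: "a < y" if "a \<in> set (x # L)" for a
      using that x y(1,2) unfolding admissible_def by auto
    moreover have "g a y \<noteq> g a1 a2" if "a \<in> set (x # L)" "a1 \<in> set (x # L)" "a2 \<in> set (x # L)" for a a1 a2
    proof -
      have "g a1 a2 \<in> C" using that(2,3) x unfolding C_def by force
      then show ?thesis using y(3) below[OF that(1)] by metis
    qed
    ultimately have "admissible g (x # L) y" by (intro admissible_Cons y(1)) auto
    then have "y \<in> U" using x unfolding U_def by blast
    then show False using y(2) by blast
  qed
  then have sub: "T \<subseteq> (\<Union>a\<in>set L. {x. x < y \<and> g x y = g a y})" using y(2) by blast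
  have "card T \<le> card (\<Union>a\<in>set L. {x. x < y \<and> g x y = g a y})"
    by (rule card_mono[OF _ sub]) auto
  also have "\<dots> \<le> (\<Sum>a\<in>set L. card {x. x < y \<and> g x y = g a y})" by (rule card_UN_le) simp
  also have "\<dots> \<le> (\<Sum>a\<in>set L. k)" by (rule sum_mono) (rule k_bounded_card_column[OF kb])
  also have "\<dots> \<le> length L * k" by (simp add: card_length)
  finally show ?thesis .
qed

lemma finite_dead_ends:
  assumes kb: "k_bounded k g" and ext: "extendible g L"
  shows "finite {x. dead_end g L x}" and "card {x. dead_end g L x} \<le> length L * k"
proof -
  show fin: "finite {x. dead_end g L x}"
  proof (rule ccontr)
    assume "infinite {x. dead_end g L x}"
    then obtain T where "T \<subseteq> {x. dead_end g L x}" "finite T" "card T = Suc (length L * k)"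
      using infinite_arbitrarily_large by blast
    then show False using card_dead_ends_le[OF kb ext] by fastforce
  qed
  show "card {x. dead_end g L x} \<le> length L * k" by (rule card_dead_ends_le[OF kb ext fin]) simp
qed

section \<open>The greedy construction\<close>

definition rank :: "(nat \<Rightarrow> nat \<Rightarrow> nat) \<Rightarrow> nat list \<Rightarrow> nat \<Rightarrow> nat" where
  "rank g L y = (\<Sum>y'<y. of_bool (admissible g L y'))"

definition nth_admissible :: "(nat \<Rightarrow> nat \<Rightarrow> nat) \<Rightarrow> nat list \<Rightarrow> nat \<Rightarrow> nat option" where
  "nth_admissible g L r = (if \<exists>y. admissible g L y \<and> rank g L y = r then Some (LEAST y. admissible g L y \<and> rank g L y = r) else None)"

definition nth_admissible_below :: "(nat \<Rightarrow> nat \<Rightarrow> nat) \<Rightarrow> nat list \<Rightarrow> nat \<Rightarrow> nat \<Rightarrow> nat option" where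
  "nth_admissible_below g L r t = (if \<exists>y<t. admissible g L y \<and> rank g L y = r then Some (LEAST y. admissible g L y \<and> rank g L y = r) else None)"

lemma rank_Suc: "rank g L (Suc y) = rank g L y + of_bool (admissible g L y)"
  by (simp add: rank_def)

lemma rank_mono: "y \<le> y' \<Longrightarrow> rank g L y \<le> rank g L y'"
  unfolding rank_def by (rule sum_mono2) auto

lemma rank_strict_mono: "y < y' \<Longrightarrow> admissible g L y \<Longrightarrow> rank g L y < rank g L y'"
proof -
  assume "y < y'" "admissible g L y"
  then have "rank g L (Suc y) \<le> rank g L y'" by (intro rank_mono) simp
  moreover have "rank g L (Suc y) = Suc (rank g L y)" using \<open>admissible g L y\<close> by (simp add: rank_Suc of_bool_def)
  ultimately show ?thesis by simp
qed

lemma card_le_rank: "finite F \<Longrightarrow> F \<subseteq> {y'. y' < y \<and> admissible g L y'} \<Longrightarrow> card F \<le> rank g L y"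
proof -
  assume F: "finite F" "F \<subseteq> {y'. y' < y \<and> admissible g L y'}"
  have "card F \<le> card {y'. y' < y \<and> admissible g L y'}" by (rule card_mono[OF _ F(2)]) auto
  also have "\<dots> = (\<Sum>y'\<in>{..<y}. of_bool (admissible g L y'))"
    by (simp add: of_bool_def sum.If_cases Int_def conj_commute)
  finally show ?thesis by (simp add: rank_def)
qed

lemma admissible_rank_inj: "admissible g L y \<Longrightarrow> admissible g L y' \<Longrightarrow> rank g L y = rank g L y' \<Longrightarrow> y = y'"
  by (metis rank_strict_mono less_irrefl nat_neq_iff)

lemma nth_admissible_SomeD: assumes "nth_admissible g L r = Some x" shows "admissible g L x \<and> rank g L x = r"
proof -
  from assms have ex: "\<exists>y. admissible g L y \<and> rank g L y = r" and x: "x = (LEAST y. admissible g L y \<and> rank g L y = r)"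
    by (auto simp: nth_admissible_def split: if_splits)
  show ?thesis unfolding x by (rule LeastI_ex[OF ex])
qed

lemma nth_admissible_eq_Some: "nth_admissible g L r = Some x \<longleftrightarrow> admissible g L x \<and> rank g L x = r"
proof
  assume "admissible g L x \<and> rank g L x = r"
  then have "(LEAST y. admissible g L y \<and> rank g L y = r) = x"
    by (intro Least_equality) (auto dest: admissible_rank_inj)
  then show "nth_admissible g L r = Some x" using \<open>admissible g L x \<and> rank g L x = r\<close> unfolding nth_admissible_def by auto
qed (rule nth_admissible_SomeD)

lemma nth_admissible_below_eq_Some: "nth_admissible_below g L r t = Some x \<longleftrightarrow> admissible g L x \<and> rank g L x = r \<and> x < t"
proof
  assume h: "nth_admissible_below g L r t = Some x"
  then obtain y where y: "y < t" "admissible g L y" "rank g L y = r" unfolding nth_admissible_below_def by (auto split: if_splits)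
  then have "(LEAST y. admissible g L y \<and> rank g L y = r) = y"
    by (intro Least_equality) (auto dest: admissible_rank_inj)
  moreover have "x = (LEAST y. admissible g L y \<and> rank g L y = r)" using h y unfolding nth_admissible_below_def by (auto split: if_splits)
  ultimately show "admissible g L x \<and> rank g L x = r \<and> x < t" using y by simp
next
  assume h: "admissible g L x \<and> rank g L x = r \<and> x < t"
  then have "(LEAST y. admissible g L y \<and> rank g L y = r) = x"
    by (intro Least_equality) (auto dest: admissible_rank_inj)
  then show "nth_admissible_below g L r t = Some x" using h unfolding nth_admissible_below_def by auto
qed

lemma extendible_nth_admissible:
  assumes "extendible g L" shows "\<exists>x. nth_admissible g L r = Some x"
proof -
  obtain F where F: "F \<subseteq> {y. admissible g L y}" "finite F" "card F = Suc r"
    using assms infinite_arbitrarily_large unfolding extendible_def by blast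
  have Fne: "F \<noteq> {}" using F(3) by auto
  let ?Y = "Suc (Max F)"
  have "F \<subseteq> {y'. y' < ?Y \<and> admissible g L y'}" using F Max_ge le_imp_less_Suc by blast
  then have "Suc r \<le> rank g L ?Y" using card_le_rank F by metis
  then have ex: "\<exists>y. r < rank g L (Suc y)" by (intro exI[of _ "Max F"]) simp
  define y0 where "y0 = (LEAST y. r < rank g L (Suc y))"
  have y0: "r < rank g L (Suc y0)" unfolding y0_def by (rule LeastI_ex[OF ex])
  have le: "rank g L y0 \<le> r"
  proof (cases y0)
    case 0 then show ?thesis by (simp add: rank_def)
  next
    case (Suc y1)
    then have "\<not> r < rank g L (Suc y1)" unfolding y0_def
      by (metis Suc lessI not_less_Least y0_def)
    then show ?thesis using Suc by simp
  qed
  have "admissible g L y0" "rank g L y0 = r"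
    using y0 le by (auto simp: rank_Suc of_bool_def split: if_splits)
  then show ?thesis using nth_admissible_eq_Some by blast
qed

fun build :: "(nat \<Rightarrow> nat \<Rightarrow> nat) \<Rightarrow> (nat \<Rightarrow> nat) \<Rightarrow> nat \<Rightarrow> nat list option" where
  "build g \<rho> 0 = Some []"
| "build g \<rho> (Suc n) = (case build g \<rho> n of None \<Rightarrow> None
     | Some L \<Rightarrow> (case nth_admissible g L (\<rho> n) of None \<Rightarrow> None | Some x \<Rightarrow> Some (x # L)))"

fun build_below :: "(nat \<Rightarrow> nat \<Rightarrow> nat) \<Rightarrow> (nat \<Rightarrow> nat) \<Rightarrow> nat \<Rightarrow> nat \<Rightarrow> nat list option" where
  "build_below g \<rho> t 0 = Some []"
| "build_below g \<rho> t (Suc n) = (case build_below g \<rho> t n of None \<Rightarrow> None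
     | Some L \<Rightarrow> (case nth_admissible_below g L (\<rho> n) t of None \<Rightarrow> None | Some x \<Rightarrow> Some (x # L)))"

lemma build_Suc_eq_Some:
  "build g \<rho> (Suc n) = Some L' \<longleftrightarrow>
     (\<exists>L x. build g \<rho> n = Some L \<and> nth_admissible g L (\<rho> n) = Some x \<and> L' = x # L)"
  by (auto split: option.splits)

lemma build_below_Suc_eq_Some:
  "build_below g \<rho> t (Suc n) = Some L' \<longleftrightarrow>
     (\<exists>L x. build_below g \<rho> t n = Some L \<and> nth_admissible_below g L (\<rho> n) t = Some x \<and> L' = x # L)"
  by (auto split: option.splits)

declare build.simps(2) [simp del] build_below.simps(2) [simp del]

lemma build_below_imp_build: "build_below g \<rho> t n = Some L \<Longrightarrow> build g \<rho> n = Some L"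
  by (induction n arbitrary: L)
     (auto simp: build_Suc_eq_Some build_below_Suc_eq_Some nth_admissible_below_eq_Some nth_admissible_eq_Some)

lemma build_imp_build_below: "build g \<rho> n = Some L \<Longrightarrow> \<forall>a\<in>set L. a < t \<Longrightarrow> build_below g \<rho> t n = Some L"
  by (induction n arbitrary: L)
     (auto simp: build_Suc_eq_Some build_below_Suc_eq_Some nth_admissible_below_eq_Some nth_admissible_eq_Some)

lemma length_build: "build g \<rho> n = Some L \<Longrightarrow> length L = n"
  by (induction n arbitrary: L) (auto simp: build_Suc_eq_Some)

lemma sorted_build: "build g \<rho> n = Some L \<Longrightarrow> sorted_wrt (>) L"
  by (induction n arbitrary: L) (auto simp: build_Suc_eq_Some admissible_def dest!: nth_admissible_SomeD)

lemma build_drop: "build g \<rho> n = Some L \<Longrightarrow> d \<le> n \<Longrightarrow> build g \<rho> (n - d) = Some (drop d L)"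
proof (induction n arbitrary: L d)
  case (Suc n)
  then show ?case by (cases d) (auto simp: build_Suc_eq_Some)
qed simp

lemma sorted_wrt_greater_imp_distinct: "sorted_wrt (>) xs \<Longrightarrow> distinct (xs :: 'a :: order list)"
  by (induction xs) auto

lemma length_le_of_sorted_desc: "sorted_wrt (>) (a # xs) \<Longrightarrow> length xs \<le> (a :: nat)"
proof -
  assume sorted: "sorted_wrt (>) (a # xs)"
  then have "distinct xs" by (simp add: sorted_wrt_greater_imp_distinct)
  then have "length xs = card (set xs)" by (simp add: distinct_card)
  also have "\<dots> \<le> card {..<a}" using sorted by (intro card_mono) auto
  finally show ?thesis by simp
qed

definition built_set :: "(nat \<Rightarrow> nat \<Rightarrow> nat) \<Rightarrow> (nat \<Rightarrow> nat) \<Rightarrow> nat set" where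
  "built_set g \<rho> = {x. \<exists>n L. build g \<rho> n = Some L \<and> x \<in> set L}"

text \<open>Elements are chosen in increasing order, so whether a belongs to the built set is decided
  by the first Suc a steps.\<close>

lemma built_set_iff_build:
  assumes L: "build g \<rho> (Suc a) = Some L"
  shows "a \<in> built_set g \<rho> \<longleftrightarrow> a \<in> set L"
proof
  assume "a \<in> built_set g \<rho>"
  then obtain n L1 where L1: "build g \<rho> n = Some L1" "a \<in> set L1" unfolding built_set_def by blast
  then obtain j where j: "j < length L1" "L1 ! j = a" by (metis in_set_conv_nth)
  have n: "length L1 = n" by (rule length_build[OF L1(1)])
  have drop_j: "drop j L1 = a # drop (Suc j) L1" using j by (metis Cons_nth_drop_Suc)
  have "sorted_wrt (>) (drop j L1)" using sorted_build[OF L1(1)] by (simp add: sorted_wrt_drop)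
  then have "length (drop (Suc j) L1) \<le> a" unfolding drop_j by (rule length_le_of_sorted_desc)
  then have m: "n - j \<le> Suc a" using j n by simp
  have "build g \<rho> (n - j) = Some (drop j L1)" using build_drop[OF L1(1)] j n by simp
  moreover have "build g \<rho> (n - j) = Some (drop (Suc a - (n - j)) L)"
    using build_drop[OF L, of "Suc a - (n - j)"] m by simp
  ultimately have "drop j L1 = drop (Suc a - (n - j)) L" by simp
  then show "a \<in> set L" using drop_j by (metis in_set_dropD list.set_intros(1))
qed (use L in \<open>auto simp: built_set_def\<close>)

definition picks_dead_end :: "(nat \<Rightarrow> nat \<Rightarrow> nat) \<Rightarrow> (nat \<Rightarrow> nat) \<Rightarrow> nat \<Rightarrow> bool" where
  "picks_dead_end g \<rho> n \<longleftrightarrow> (\<exists>L x. build g \<rho> n = Some L \<and> nth_admissible g L (\<rho> n) = Some x \<and> dead_end g L x)"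

lemma build_extendible_rainbow:
  assumes "\<forall>n. \<not> picks_dead_end g \<rho> n"
  shows "\<exists>L. build g \<rho> n = Some L \<and> extendible g L \<and> rainbow g (set L)"
proof (induction n)
  case 0 then show ?case using extendible_Nil by (simp add: rainbow_def)
next
  case (Suc n)
  then obtain L where L: "build g \<rho> n = Some L" "extendible g L" "rainbow g (set L)" by blast
  obtain x where x: "nth_admissible g L (\<rho> n) = Some x" using extendible_nth_admissible[OF L(2)] by blast
  have adm: "admissible g L x" using nth_admissible_SomeD[OF x] by blast
  have "\<not> dead_end g L x" using assms L(1) x unfolding picks_dead_end_def by blast
  then have "extendible g (x # L)" using adm unfolding dead_end_def by blast
  moreover have "rainbow g (set (x # L))" by (rule rainbow_insert_admissible[OF L(3) adm])
  ultimately show ?case using L x by (auto simp: build_Suc_eq_Some)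
qed

lemma built_set_infinite_rainbow:
  assumes "\<forall>n. \<not> picks_dead_end g \<rho> n"
  shows "infinite (built_set g \<rho>)" and "rainbow g (built_set g \<rho>)"
proof -
  have built: "\<exists>L. build g \<rho> n = Some L \<and> rainbow g (set L)" for n
    using build_extendible_rainbow[OF assms] by blast
  show "infinite (built_set g \<rho>)"
  proof
    assume fin: "finite (built_set g \<rho>)"
    obtain L where L: "build g \<rho> (Suc (card (built_set g \<rho>))) = Some L" using built by blast
    have "distinct L" using sorted_build[OF L] by (simp add: sorted_wrt_greater_imp_distinct)
    then have "card (set L) = Suc (card (built_set g \<rho>))" using length_build[OF L] by (simp add: distinct_card)
    moreover have "card (set L) \<le> card (built_set g \<rho>)"
      using L by (intro card_mono[OF fin]) (auto simp: built_set_def)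
    ultimately show False by simp
  qed
  show "rainbow g (built_set g \<rho>)"
    unfolding rainbow_def
  proof (intro allI impI)
    fix x y u v assume h: "x \<in> built_set g \<rho>" "y \<in> built_set g \<rho>" "u \<in> built_set g \<rho>" "v \<in> built_set g \<rho>"
      "x < y" "u < v" "g x y = g u v"
    define N where "N = Suc (x + y + u + v)"
    obtain L where L: "build g \<rho> N = Some L" "rainbow g (set L)" using built by blast
    have "z \<in> set L" if "z \<in> built_set g \<rho>" "z \<le> x + y + u + v" for z
    proof -
      have "build g \<rho> (Suc z) = Some (drop (N - Suc z) L)"
        using build_drop[OF L(1), of "N - Suc z"] that(2) by (simp add: N_def)
      then show ?thesis using built_set_iff_build that(1) by (metis in_set_dropD)
    qed
    then have "x \<in> set L" "y \<in> set L" "u \<in> set L" "v \<in> set L" using h by auto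
    then show "x = u \<and> y = v" using L(2) h unfolding rainbow_def by blast
  qed
qed

text \<open>Step n of the construction for coloring i reads its choice, as a little-endian number, from
  block prod_encode (i, n) of a bit source \<beta> s; here s is either the code of a finite string or a dummy
  argument.\<close>

definition block_len :: "nat \<Rightarrow> nat \<Rightarrow> nat \<Rightarrow> nat" where "block_len c k b = c + 2 * b + k + 1"
definition block_start :: "nat \<Rightarrow> nat \<Rightarrow> nat \<Rightarrow> nat" where "block_start c k b = (\<Sum>b'<b. block_len c k b')"

definition block_value :: "(nat \<Rightarrow> nat \<Rightarrow> nat) \<Rightarrow> nat \<Rightarrow> nat \<Rightarrow> nat \<Rightarrow> nat \<Rightarrow> nat \<Rightarrow> nat" where
  "block_value \<beta> s c k i n = (\<Sum>j<block_len c k (prod_encode (i, n)). 2 ^ j * \<beta> s (block_start c k (prod_encode (i, n)) + j))"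

definition admissible_code :: "(nat \<Rightarrow> nat \<Rightarrow> nat \<Rightarrow> nat) \<Rightarrow> nat \<Rightarrow> nat \<Rightarrow> nat \<Rightarrow> bool" where
  "admissible_code G i z y \<longleftrightarrow> (\<forall>j<code_length z. code_nth z j < y) \<and>
     (\<forall>j<code_length z. \<forall>j'<code_length z. code_nth z j \<noteq> code_nth z j' \<longrightarrow> G i (code_nth z j) y \<noteq> G i (code_nth z j') y) \<and>
     (\<forall>j<code_length z. \<forall>j1<code_length z. \<forall>j2<code_length z. code_nth z j1 < code_nth z j2 \<longrightarrow> G i (code_nth z j) y \<noteq> G i (code_nth z j1) (code_nth z j2))"

lemma admissible_code_eq: "admissible_code G i (list_encode L) y = admissible (G i) L y"
  unfolding admissible_code_def admissible_def code_length_eq list_encode_inverse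
  by (simp add: code_nth_eq all_set_conv_all_nth)

definition rank_code :: "(nat \<Rightarrow> nat \<Rightarrow> nat \<Rightarrow> nat) \<Rightarrow> nat \<Rightarrow> nat \<Rightarrow> nat \<Rightarrow> nat" where
  "rank_code G i z y = (\<Sum>y'<y. of_bool (admissible_code G i z y'))"

lemma rank_code_eq: "rank_code G i (list_encode L) y = rank (G i) L y"
  unfolding rank_code_def rank_def admissible_code_eq ..

definition choose_code :: "(nat \<Rightarrow> nat \<Rightarrow> nat \<Rightarrow> nat) \<Rightarrow> nat \<Rightarrow> nat \<Rightarrow> nat \<Rightarrow> nat \<Rightarrow> nat" where
  "choose_code G i z r t = bounded_least t (\<lambda>y. admissible_code G i z y \<and> rank_code G i z y = r)"

lemma nth_admissible_below_code: "nth_admissible_below (G i) L r t = (if choose_code G i (list_encode L) r t < t then Some (choose_code G i (list_encode L) r t) else None)"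
  unfolding nth_admissible_below_def choose_code_def bounded_least_def admissible_code_eq rank_code_eq by (auto intro: le_less_trans[OF Least_le])

text \<open>Lists are coded by Suc (list_encode L), with 0 signalling failure, and
  Suc (prod_encode (x, list_encode L)) = list_encode (x # L).\<close>

definition step_code :: "(nat \<Rightarrow> nat \<Rightarrow> nat \<Rightarrow> nat) \<Rightarrow> nat \<Rightarrow> nat \<Rightarrow> nat \<Rightarrow> nat \<Rightarrow> nat" where
  "step_code G i z r t = (if z = 0 then 0 else if choose_code G i (z - 1) r t < t
     then Suc (Suc (prod_encode (choose_code G i (z - 1) r t, z - 1))) else 0)"

fun build_code :: "(nat \<Rightarrow> nat \<Rightarrow> nat \<Rightarrow> nat) \<Rightarrow> (nat \<Rightarrow> nat \<Rightarrow> nat) \<Rightarrow> nat \<Rightarrow> nat \<Rightarrow> nat \<Rightarrow> nat \<Rightarrow> nat \<Rightarrow> nat \<Rightarrow> nat" where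
  "build_code G \<beta> k 0 c i t s = 1"
| "build_code G \<beta> k (Suc n) c i t s = step_code G i (build_code G \<beta> k n c i t s) (block_value \<beta> s c k i n) t"

definition option_code :: "nat list option \<Rightarrow> nat" where
  "option_code x = (case x of None \<Rightarrow> 0 | Some L \<Rightarrow> Suc (list_encode L))"

lemma build_code_eq: "build_code G \<beta> k n c i t s = option_code (build_below (G i) (block_value \<beta> s c k i) t n)"
proof (induction n)
  case 0 then show ?case by (simp add: option_code_def)
next
  case (Suc n)
  show ?case
  proof (cases "build_below (G i) (block_value \<beta> s c k i) t n")
    case None then show ?thesis using Suc by (simp add: option_code_def step_code_def build_below.simps(2))
  next
    case (Some L) then show ?thesis using Suc by (simp add: option_code_def step_code_def nth_admissible_below_code build_below.simps(2))
  qed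
qed

context
  fixes A :: "nat \<Rightarrow> bool" and G :: "nat \<Rightarrow> nat \<Rightarrow> nat \<Rightarrow> nat"
  assumes G: "computable A 3 (\<lambda>xs. G (xs!0) (xs!1) (xs!2))"
begin

lemma decidable_admissible_code: "computable A n e1 \<Longrightarrow> computable A n e2 \<Longrightarrow> computable A n e3 \<Longrightarrow> decidable A n (\<lambda>xs. admissible_code G (e1 xs) (e2 xs) (e3 xs))"
  unfolding admissible_code_def by (intro computable_intros3 computable_apply3[OF G] decidable_ball decidable_imp decidable_conj;
      (intro computable_intros3 computable_apply3[OF G])?; simp)

lemma computable_rank_code: "computable A n e1 \<Longrightarrow> computable A n e2 \<Longrightarrow> computable A n e3 \<Longrightarrow> computable A n (\<lambda>xs. rank_code G (e1 xs) (e2 xs) (e3 xs))"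
  unfolding rank_code_def by (intro computable_intros3 decidable_admissible_code; simp)

lemma computable_choose_code: "computable A n e1 \<Longrightarrow> computable A n e2 \<Longrightarrow> computable A n e3 \<Longrightarrow> computable A n e4 \<Longrightarrow>
   computable A n (\<lambda>xs. choose_code G (e1 xs) (e2 xs) (e3 xs) (e4 xs))"
  unfolding choose_code_def by (intro computable_intros3 decidable_admissible_code computable_rank_code; simp)

lemma computable_step_code: "computable A n e1 \<Longrightarrow> computable A n e2 \<Longrightarrow> computable A n e3 \<Longrightarrow> computable A n e4 \<Longrightarrow>
   computable A n (\<lambda>xs. step_code G (e1 xs) (e2 xs) (e3 xs) (e4 xs))"
  unfolding step_code_def by (intro computable_intros3 computable_choose_code; simp)

end

lemma computable_block_value:
  assumes \<beta>: "computable A 2 (\<lambda>xs. \<beta> (xs!0) (xs!1))"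
  shows "computable A n e1 \<Longrightarrow> computable A n e2 \<Longrightarrow> computable A n e3 \<Longrightarrow> computable A n e4 \<Longrightarrow>
    computable A n (\<lambda>xs. block_value \<beta> (e1 xs) (e2 xs) k (e3 xs) (e4 xs))"
  unfolding block_value_def block_len_def block_start_def by (intro computable_intros3 computable_apply2[OF \<beta>]; simp)

context
  fixes A :: "nat \<Rightarrow> bool" and G :: "nat \<Rightarrow> nat \<Rightarrow> nat \<Rightarrow> nat" and \<beta> :: "nat \<Rightarrow> nat \<Rightarrow> nat" and k :: nat
  assumes G: "computable A 3 (\<lambda>xs. G (xs!0) (xs!1) (xs!2))"
    and \<beta>: "computable A 2 (\<lambda>xs. \<beta> (xs!0) (xs!1))"
begin

lemma computable_build_code_aux: "computable A (Suc 4) (\<lambda>xs. (\<lambda>n ys. build_code G \<beta> k n (ys!0) (ys!1) (ys!2) (ys!3)) (hd xs) (tl xs))"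
  by (rule computable_primrec[where f="\<lambda>ys. 1" and g="\<lambda>r y ys. step_code G (ys!1) r (block_value \<beta> (ys!3) (ys!0) k (ys!1) y) (ys!2)"])
     ((intro computable_intros3 computable_step_code[OF G] computable_block_value[OF \<beta>]; simp) | simp)+

lemma computable_build_code: "computable A n e0 \<Longrightarrow> computable A n e1 \<Longrightarrow> computable A n e2 \<Longrightarrow> computable A n e3 \<Longrightarrow> computable A n e4 \<Longrightarrow>
   computable A n (\<lambda>xs. build_code G \<beta> k (e0 xs) (e1 xs) (e2 xs) (e3 xs) (e4 xs))"
proof -
  assume h: "computable A n e0" "computable A n e1" "computable A n e2" "computable A n e3" "computable A n e4"
  have "computable A n (\<lambda>xs. (\<lambda>ys. build_code G \<beta> k (hd ys) (tl ys!0) (tl ys!1) (tl ys!2) (tl ys!3)) (map (\<lambda>f. f xs) [e0, e1, e2, e3, e4]))"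
    by (rule computable_comp) (use h computable_build_code_aux in \<open>auto simp: numeral_eq_Suc\<close>)
  then show ?thesis by simp
qed

end

lemma enc_inject: "enc p = enc q \<Longrightarrow> p = q"
proof (induction p arbitrary: q)
  case Zero then show ?case by (cases q) auto
next
  case Succ then show ?case by (cases q) auto
next
  case (Proj i) then show ?case by (cases q) auto
next
  case (Comp f gs)
  then show ?case
  proof (cases q)
    case (Comp f' gs')
    with Comp.prems have e: "enc f = enc f'" "list_encode (map enc gs) = list_encode (map enc gs')" by auto
    then have "map enc gs = map enc gs'" by (simp add: list_encode_eq)
    moreover have "\<And>gs'. map enc gs = map enc gs' \<Longrightarrow> gs = gs'"
      using Comp.IH(2)
    proof (induction gs)
      case Nil then show ?case by simp
    next
      case (Cons g gs)
      then show ?case by (cases gs') auto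
    qed
    ultimately show ?thesis using Comp.IH(1) e(1) \<open>q = Comp f' gs'\<close> by blast
  qed auto
next
  case (Prim f g) then show ?case by (cases q) auto
next
  case (Mn f) then show ?case by (cases q) auto
next
  case Orc then show ?case by (cases q) auto
qed

fun drop_oracle :: "rf \<Rightarrow> rf" where
  "drop_oracle Zero = Zero"
| "drop_oracle Succ = Succ"
| "drop_oracle (Proj i) = Proj i"
| "drop_oracle (Comp f gs) = Comp (drop_oracle f) (map drop_oracle gs)"
| "drop_oracle (Prim f g) = Prim (drop_oracle f) (drop_oracle g)"
| "drop_oracle (Mn f) = Mn (drop_oracle f)"
| "drop_oracle Orc = Zero"

lemma evalr_drop_oracle: "evalr empty_oracle p xs v \<Longrightarrow> evalr A (drop_oracle p) xs v"
proof (induction rule: evalr.induct)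
  case (ev_Comp xs gs ys f v)
  have "list_all2 (\<lambda>g. evalr A g xs) (map drop_oracle gs) ys"
    using ev_Comp.IH(1) by (simp add: list_all2_conv_all_nth)
  then show ?case using ev_Comp.IH(2) by (auto intro: evalr.ev_Comp)
next
  case (ev_Orc x xs) then show ?case by (auto simp: empty_oracle_def intro: evalr.intros)
next
  case (ev_Proj i xs) then show ?case using evalr.ev_Proj[of A i xs] by simp
qed (auto intro: evalr.intros)

lemma computable_coloring_seq_padded:
  assumes "computable_coloring_seq f"
  shows "computable A 3 (\<lambda>xs. f (xs!0) (xs!1) (max (xs!2) (Suc (xs!1))))"
proof -
  obtain p where p: "\<forall>i x y. x < y \<longrightarrow> evalr empty_oracle p [i, x, y] (f i x y)"
    using assms unfolding computable_coloring_seq_def by blast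
  have "computable A 3 (\<lambda>xs. max (xs!2) (Suc (xs!1)))"
    unfolding max_def by (intro computable_intros3; simp)
  then obtain pm where pm: "\<forall>xs. length xs = 3 \<longrightarrow> evalr A pm xs (max (xs!2) (Suc (xs!1)))"
    unfolding computable_def by blast
  show ?thesis unfolding computable_def
  proof (intro exI[of _ "Comp (drop_oracle p) [Proj 0, Proj 1, pm]"] allI impI)
    fix xs :: "nat list" assume l: "length xs = 3"
    then obtain i x y where xs: "xs = [i, x, y]" by (auto simp: numeral_3_eq_3 length_Suc_conv)
    have e1: "evalr A (drop_oracle p) [i, x, max y (Suc x)] (f i x (max y (Suc x)))"
      using p evalr_drop_oracle by auto
    have e2: "list_all2 (\<lambda>g. evalr A g xs) [Proj 0, Proj 1, pm] [i, x, max y (Suc x)]"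
      using pm[rule_format, of "[i,x,y]"] xs evalr.ev_Proj[of A 0 xs] evalr.ev_Proj[of A 1 xs] by auto
    show "evalr A (Comp (drop_oracle p) [Proj 0, Proj 1, pm]) xs (f (xs!0) (xs!1) (max (xs!2) (Suc (xs!1))))"
      using evalr.ev_Comp[OF e2 e1] xs by simp
  qed
qed

lemma evalr_Mn_Least:
  assumes q: "\<forall>xs'. length xs' = Suc n \<longrightarrow> evalr A q xs' (F xs')" and l: "length xs = n"
    and w: "F (w # xs) = 0"
  shows "evalr A (Mn q) xs (LEAST w. F (w # xs) = 0)"
proof (rule evalr.ev_Mn)
  have "F ((LEAST w. F (w # xs) = 0) # xs) = 0" by (rule LeastI[of "\<lambda>w. F (w # xs) = 0", OF w])
  moreover have "evalr A q ((LEAST w. F (w # xs) = 0) # xs) (F ((LEAST w. F (w # xs) = 0) # xs))"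
    using q l by simp
  ultimately show "evalr A q ((LEAST w. F (w # xs) = 0) # xs) 0" by simp
  show "\<forall>z<(LEAST w. F (w # xs) = 0). \<exists>v. evalr A q (z # xs) v \<and> v \<noteq> 0"
    using q l not_less_Least[of _ "\<lambda>w. F (w # xs) = 0"] by force
qed

lemma evalr_MnD:
  assumes q: "\<forall>xs'. length xs' = Suc n \<longrightarrow> evalr A q xs' (F xs')" and l: "length xs = n"
    and e: "evalr A (Mn q) xs v"
  shows "F (v # xs) = 0"
proof -
  from e have "evalr A q (v # xs) 0" by (rule MnE) simp
  moreover have "evalr A q (v # xs) (F (v # xs))" using q l by simp
  ultimately show ?thesis using evalr_det by metis
qed

lemma ce_rel_strings_exists:
  assumes "decidable A 3 (\<lambda>xs. \<not> T (xs!1) (xs!2) (xs!0))"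
  shows "ce_rel_strings A (\<lambda>c \<sigma>. \<exists>w. T c (str_code \<sigma>) w)"
proof -
  obtain q where q: "\<forall>xs. length xs = 3 \<longrightarrow> evalr A q xs (of_bool (\<not> T (xs!1) (xs!2) (xs!0)))"
    using assms unfolding decidable_def computable_def by blast
  have q': "\<forall>xs'. length xs' = Suc 2 \<longrightarrow> evalr A q xs' (of_bool (\<not> T (xs'!1) (xs'!2) (xs'!0)))" using q by simp
  show ?thesis unfolding ce_rel_strings_def
  proof (intro exI[of _ "Mn q"] allI)
    fix c \<sigma>
    show "(\<exists>w. T c (str_code \<sigma>) w) \<longleftrightarrow> (\<exists>v. evalr A (Mn q) [c, str_code \<sigma>] v)"
    proof
      assume "\<exists>w. T c (str_code \<sigma>) w"
      then obtain w where "T c (str_code \<sigma>) w" by blast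
      then have "of_bool (\<not> T ((w # [c, str_code \<sigma>])!1) ((w # [c, str_code \<sigma>])!2) ((w # [c, str_code \<sigma>])!0)) = (0::nat)"
        by simp
      from evalr_Mn_Least[OF q' _ this] show "\<exists>v. evalr A (Mn q) [c, str_code \<sigma>] v" by auto
    next
      assume "\<exists>v. evalr A (Mn q) [c, str_code \<sigma>] v"
      then obtain v where "evalr A (Mn q) [c, str_code \<sigma>] v" by blast
      from evalr_MnD[OF q' _ this] show "\<exists>w. T c (str_code \<sigma>) w" by (auto simp: of_bool_def split: if_splits)
    qed
  qed
qed

section \<open>Querying the halting problem\<close>

definition query_code :: "nat \<Rightarrow> nat \<Rightarrow> nat" where
  "query_code a P = prod_encode (3, prod_encode (a, Suc (prod_encode (prod_encode (2, 0),
      Suc (prod_encode (prod_encode (2, Suc P), 0))))))"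

lemma query_code_inject: "query_code a P = query_code a' P' \<Longrightarrow> a = a' \<and> P = P'"
  unfolding query_code_def by simp

text \<open>P codes a triple (i, list_encode L, m).\<close>

definition query_holds :: "(nat \<Rightarrow> nat \<Rightarrow> nat \<Rightarrow> nat) \<Rightarrow> nat \<Rightarrow> nat \<Rightarrow> bool" where
  "query_holds G P y \<longleftrightarrow> pair_snd (pair_snd P) < y \<and> admissible_code G (pair_fst P) (pair_fst (pair_snd P)) y"

definition query_search :: "(nat \<Rightarrow> nat \<Rightarrow> nat \<Rightarrow> nat) \<Rightarrow> nat list \<Rightarrow> nat" where
  "query_search G xs = of_bool (\<not> (xs!1 = query_code (pair_fst (xs!0)) (pair_fst (pair_snd (xs!0))) \<and> query_holds G (pair_fst (pair_snd (xs!0))) (pair_snd (pair_snd (xs!0)))))"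

lemma evalr_Comp_Proj_0_Suc:
  "evalr A (Comp q [Proj 0, Proj (Suc P)]) [c] v \<longleftrightarrow> evalr A q [c, 0] v"
proof -
  have projs: "list_all2 (\<lambda>g. evalr A g [c]) [Proj 0, Proj (Suc P)] [c, 0]"
    using evalr.ev_Proj[of A 0 "[c]"] evalr.ev_Proj[of A "Suc P" "[c]"] by simp
  moreover have "ys = [c, 0]" if "list_all2 (\<lambda>g. evalr A g [c]) [Proj 0, Proj (Suc P)] ys" for ys
    using that projs evalr_det by (auto simp: list_all2_Cons1)
  ultimately show ?thesis by (auto elim: CompE intro: evalr.ev_Comp)
qed

text \<open>The program coded by query_code (enc (Mn q)) P runs the search Mn q on its own code; the
  argument Proj (Suc P) always evaluates to 0 and only serves to store P in the code.\<close>

lemma halting_query_code_iff: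
  assumes q: "\<forall>xs. length xs = Suc 2 \<longrightarrow> evalr empty_oracle q xs (query_search G xs)"
  shows "halting (query_code (enc (Mn q)) P) \<longleftrightarrow> (\<exists>y. query_holds G P y)"
proof -
  let ?c = "query_code (enc (Mn q)) P"
  have enc: "enc (Comp (Mn q) [Proj 0, Proj (Suc P)]) = ?c" by (simp add: query_code_def)
  have "halting ?c \<longleftrightarrow> (\<exists>v. evalr empty_oracle (Comp (Mn q) [Proj 0, Proj (Suc P)]) [?c] v)"
  proof
    assume "halting ?c"
    then obtain p v where p: "enc p = ?c" and "evalr empty_oracle p [?c] v" unfolding halting_def by blast
    moreover from p have "p = Comp (Mn q) [Proj 0, Proj (Suc P)]" unfolding enc[symmetric] by (rule enc_inject)
    ultimately show "\<exists>v. evalr empty_oracle (Comp (Mn q) [Proj 0, Proj (Suc P)]) [?c] v" by blast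
  qed (unfold halting_def, use enc in blast)
  also have "\<dots> \<longleftrightarrow> (\<exists>v. evalr empty_oracle (Mn q) [?c, 0] v)" by (simp only: evalr_Comp_Proj_0_Suc)
  also have "\<dots> \<longleftrightarrow> (\<exists>w. query_search G (w # [?c, 0]) = 0)"
  proof
    assume "\<exists>v. evalr empty_oracle (Mn q) [?c, 0] v"
    then obtain v where "evalr empty_oracle (Mn q) [?c, 0] v" by blast
    then have "query_search G (v # [?c, 0]) = 0" by (rule evalr_MnD[OF q, rotated]) simp
    then show "\<exists>w. query_search G (w # [?c, 0]) = 0" by blast
  next
    assume "\<exists>w. query_search G (w # [?c, 0]) = 0"
    then obtain w where "query_search G (w # [?c, 0]) = 0" by blast
    from evalr_Mn_Least[OF q _ this] show "\<exists>v. evalr empty_oracle (Mn q) [?c, 0] v" by auto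
  qed
  also have "\<dots> \<longleftrightarrow> (\<exists>y. query_holds G P y)"
  proof
    assume "\<exists>w. query_search G (w # [?c, 0]) = 0"
    then obtain w where "?c = query_code (pair_fst w) (pair_fst (pair_snd w))"
      "query_holds G (pair_fst (pair_snd w)) (pair_snd (pair_snd w))"
      unfolding query_search_def by (auto split: if_splits)
    then show "\<exists>y. query_holds G P y" using query_code_inject by metis
  next
    assume "\<exists>y. query_holds G P y"
    then obtain y where "query_holds G P y" by blast
    then have "query_search G (prod_encode (enc (Mn q), prod_encode (P, y)) # [?c, 0]) = 0"
      by (simp add: query_search_def)
    then show "\<exists>w. query_search G (w # [?c, 0]) = 0" by blast
  qed
  finally show ?thesis .
qed

lemma halting_decides_queries:
  assumes G: "computable empty_oracle 3 (\<lambda>xs. G (xs!0) (xs!1) (xs!2))"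
  shows "\<exists>EH. \<forall>P. halting (query_code EH P) \<longleftrightarrow> (\<exists>y. query_holds G P y)"
proof -
  have "computable empty_oracle 3 (query_search G)"
    unfolding query_search_def query_code_def query_holds_def
    by (intro computable_intros3 decidable_admissible_code[OF G]; simp)
  then obtain q where "\<forall>xs. length xs = Suc 2 \<longrightarrow> evalr empty_oracle q xs (query_search G xs)"
    unfolding computable_def by (auto simp: numeral_eq_Suc)
  then show ?thesis using halting_query_code_iff by blast
qed

lemma cyl_eq_prod_emb: "cyl \<sigma> = prod_emb UNIV (\<lambda>_. measure_pmf (bernoulli_pmf (1/2))) {..<length \<sigma>} (PiE {..<length \<sigma>} (\<lambda>i. {\<sigma>!i}))"
  unfolding cyl_def prod_emb_def by (auto simp: PiE_def extensional_def restrict_def Pi_def)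

lemma cyl_sets[measurable]: "cyl \<sigma> \<in> sets cantor"
  unfolding cantor_def cyl_eq_prod_emb by (rule sets_PiM_I) auto

lemma emeasure_cyl: "emeasure cantor (cyl \<sigma>) = ennreal ((1/2) ^ length \<sigma>)"
proof -
  have "emeasure cantor (cyl \<sigma>) = (\<Prod>i\<in>{..<length \<sigma>}. emeasure (measure_pmf (bernoulli_pmf (1/2))) {\<sigma>!i})"
    unfolding cantor_def cyl_eq_prod_emb
    by (rule emeasure_PiM_emb) (auto simp: prob_space_measure_pmf)
  also have "\<dots> = (\<Prod>i\<in>{..<length \<sigma>}. ennreal (1/2))"
    by (simp add: emeasure_pmf_single pmf_bernoulli_half)
  also have "\<dots> = ennreal (1/2) ^ length \<sigma>" by (simp only: prod_constant card_lessThan)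
  also have "\<dots> = ennreal ((1/2) ^ length \<sigma>)" by (rule ennreal_power) simp
  finally show ?thesis .
qed

fun bits_value :: "bool list \<Rightarrow> nat" where
  "bits_value [] = 0"
| "bits_value (b # \<rho>) = of_bool b + 2 * bits_value \<rho>"

lemma bits_value_inj: "length \<rho> = length \<rho>' \<Longrightarrow> bits_value \<rho> = bits_value \<rho>' \<Longrightarrow> \<rho> = \<rho>'"
proof (induction \<rho> arbitrary: \<rho>')
  case (Cons b \<rho>)
  then obtain b' r' where r: "\<rho>' = b' # r'" by (cases \<rho>') auto
  with Cons.prems have "of_bool b + 2 * bits_value \<rho> = of_bool b' + 2 * bits_value r'" by simp
  moreover from this have "b = b'" by (cases b; cases b'; simp; presburger)
  ultimately have "b = b'" "bits_value \<rho> = bits_value r'" by simp_all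
  then show ?case using Cons r by simp
qed simp
lemma finite_lists_bool_length: "finite {\<tau> :: bool list. length \<tau> = a}"
  using finite_lists_length_eq[of "UNIV :: bool set" a] by simp

lemma card_lists_bool_length: "card {\<tau> :: bool list. length \<tau> = a} = 2 ^ a"
  using card_lists_length_eq[of "UNIV :: bool set" a] by simp

lemma emeasure_cyl_extensions_le:
  assumes "finite S" "\<forall>\<rho>\<in>S. length \<rho> = l" "card S \<le> N"
  shows "emeasure cantor (\<Union>\<rho>\<in>S. cyl (\<tau> @ \<rho>)) \<le> of_nat N * ennreal ((1/2) ^ (length \<tau> + l))"
proof -
  have "emeasure cantor (\<Union>\<rho>\<in>S. cyl (\<tau> @ \<rho>)) \<le> (\<Sum>\<rho>\<in>S. emeasure cantor (cyl (\<tau> @ \<rho>)))"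
    by (rule emeasure_subadditive_finite[OF assms(1)]) auto
  also have "\<dots> = (\<Sum>\<rho>\<in>S. ennreal ((1/2) ^ (length \<tau> + l)))"
    by (rule sum.cong) (use assms(2) in \<open>auto simp: emeasure_cyl\<close>)
  also have "\<dots> \<le> of_nat N * ennreal ((1/2) ^ (length \<tau> + l))"
    using assms(3) by (simp add: mult_right_mono)
  finally show ?thesis .
qed

lemma emeasure_block_cover_le:
  fixes a l N :: nat and R :: "bool list \<Rightarrow> nat set"
  assumes R: "\<And>\<tau>. finite (R \<tau>) \<and> card (R \<tau>) \<le> N"
  defines "U \<equiv> (\<Union>\<tau>\<in>{\<tau>. length \<tau> = a}. \<Union>\<rho>\<in>{\<rho>. length \<rho> = l \<and> bits_value \<rho> \<in> R \<tau>}. cyl (\<tau> @ \<rho>))"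
  shows "U \<in> sets cantor" "emeasure cantor U \<le> ennreal (real N * (1/2) ^ l)"
proof -
  let ?T = "{\<tau> :: bool list. length \<tau> = a}"
  let ?S = "\<lambda>\<tau>. {\<rho>. length \<rho> = l \<and> bits_value \<rho> \<in> R \<tau>}"
  have finS: "finite (?S \<tau>)" for \<tau> by (rule finite_subset[OF _ finite_lists_bool_length[of l]]) auto
  have cardS: "card (?S \<tau>) \<le> N" for \<tau>
  proof -
    have "inj_on bits_value (?S \<tau>)" by (auto intro!: inj_onI bits_value_inj)
    moreover have "bits_value ` ?S \<tau> \<subseteq> R \<tau>" by auto
    ultimately have "card (?S \<tau>) \<le> card (R \<tau>)" using R card_inj_on_le by blast
    then show ?thesis using R[of \<tau>] by linarith
  qed
  have inner_sets: "(\<Union>\<rho>\<in>?S \<tau>. cyl (\<tau> @ \<rho>)) \<in> sets cantor" for \<tau>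
    by (intro sets.finite_UN finS) auto
  show "U \<in> sets cantor" unfolding U_def
    by (intro sets.finite_UN finite_lists_bool_length inner_sets)
  let ?q = "ennreal ((1/2) ^ (a + l))"
  have "emeasure cantor U \<le> (\<Sum>\<tau>\<in>?T. emeasure cantor (\<Union>\<rho>\<in>?S \<tau>. cyl (\<tau> @ \<rho>)))"
    unfolding U_def by (rule emeasure_subadditive_finite[OF finite_lists_bool_length]) (use inner_sets in auto)
  also have "\<dots> \<le> (\<Sum>\<tau>\<in>?T. of_nat N * ?q)"
    by (rule sum_mono) (use emeasure_cyl_extensions_le[OF finS _ cardS] in auto)
  also have "\<dots> = of_nat (2 ^ a) * (of_nat N * ?q)" by (simp add: card_lists_bool_length)
  also have "\<dots> = ennreal (real (2 ^ a) * (real N * (1/2) ^ (a + l)))"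
    by (simp add: ennreal_mult ennreal_of_nat_eq_real_of_nat)
  also have "real (2 ^ a) * (real N * (1/2) ^ (a + l)) = real N * (1/2) ^ l"
    by (simp add: power_add field_simps)
  finally show "emeasure cantor U \<le> ennreal (real N * (1/2) ^ l)" .
qed

section \<open>Measure of the dead-end events\<close>

text \<open>The second argument of oracle_bit is a dummy, so that oracle_bit Y fits the bit-source
  interface of block_value.\<close>

definition oracle_bit :: "(nat \<Rightarrow> bool) \<Rightarrow> nat \<Rightarrow> nat \<Rightarrow> nat" where "oracle_bit Y s j = of_bool (Y j)"

definition oracle_choice :: "(nat \<Rightarrow> bool) \<Rightarrow> nat \<Rightarrow> nat \<Rightarrow> nat \<Rightarrow> nat \<Rightarrow> nat" where
  "oracle_choice Y c k i n = block_value (oracle_bit Y) 0 c k i n"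

lemma bits_value_eq_sum: "bits_value \<rho> = (\<Sum>j<length \<rho>. 2 ^ j * of_bool (\<rho> ! j))"
proof (induction \<rho>)
  case (Cons b \<rho>)
  have "(\<Sum>j<length (b # \<rho>). 2 ^ j * of_bool ((b # \<rho>) ! j)) = of_bool b + 2 * (\<Sum>j<length \<rho>. 2 ^ j * (of_bool (\<rho> ! j) :: nat))"
    by (simp only: length_Cons sum.lessThan_Suc_shift nth_Cons_0 nth_Cons_Suc power_0 power_Suc
        mult_1 sum_distrib_left mult.assoc)
  then show ?case using Cons by simp
qed simp

lemma oracle_choice_eq_bits_value: "oracle_choice Y c k i n = bits_value (map Y [block_start c k (prod_encode (i, n))..<block_start c k (prod_encode (i, n)) + block_len c k (prod_encode (i, n))])"
  unfolding oracle_choice_def block_value_def bits_value_eq_sum oracle_bit_def by simp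

lemma block_start_Suc: "block_start c k (Suc b) = block_start c k b + block_len c k b"
  by (simp add: block_start_def)

lemma block_start_mono: "b \<le> b' \<Longrightarrow> block_start c k b \<le> block_start c k b'"
  unfolding block_start_def by (rule sum_mono2) auto

lemma block_end_le_start: "b < b' \<Longrightarrow> block_start c k b + block_len c k b \<le> block_start c k b'"
  using block_start_mono[of "Suc b" b' c k] by (simp add: block_start_Suc)

lemma prod_encode_strict_mono: "n' < n \<Longrightarrow> prod_encode (i, n') < prod_encode (i, n)"
proof -
  assume "n' < n"
  have sm: "strict_mono triangle" unfolding strict_mono_Suc_iff by simp
  have "triangle (i + n') < triangle (i + n)" by (rule strict_monoD[OF sm]) (use \<open>n' < n\<close> in simp)
  then show ?thesis by (simp add: prod_encode_def)
qed

lemma build_cong: "(\<forall>n'<n. \<rho> n' = \<rho>' n') \<Longrightarrow> build g \<rho> n = build g \<rho>' n"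
  by (induction n) (auto simp: build.simps(2) split: option.splits)

lemma build_below_cong: "(\<forall>n'<n. \<rho> n' = \<rho>' n') \<Longrightarrow> build_below g \<rho> t n = build_below g \<rho>' t n"
  by (induction n) (auto simp: build_below.simps(2) split: option.splits)

lemma block_value_cong:
  assumes "\<forall>j<block_start c k (prod_encode (i, n)) + block_len c k (prod_encode (i, n)). \<beta> s j = \<beta>' s' j"
    and "n' \<le> n"
  shows "block_value \<beta> s c k i n' = block_value \<beta>' s' c k i n'"
proof -
  have "block_start c k (prod_encode (i, n')) + block_len c k (prod_encode (i, n')) \<le> block_start c k (prod_encode (i, n)) + block_len c k (prod_encode (i, n))"
  proof (cases "n' = n")
    case False
    then have "prod_encode (i, n') < prod_encode (i, n)" using assms(2) prod_encode_strict_mono by simp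
    then show ?thesis using block_end_le_start[of "prod_encode (i, n')" "prod_encode (i, n)" c k] by simp
  qed simp
  then show ?thesis unfolding block_value_def using assms(1) by (intro sum.cong refl) auto
qed

definition bits_of_string :: "bool list \<Rightarrow> nat \<Rightarrow> bool" where "bits_of_string \<tau> j = (j < length \<tau> \<and> \<tau> ! j)"

definition loses_extendibility :: "(nat \<Rightarrow> nat \<Rightarrow> nat) \<Rightarrow> (nat \<Rightarrow> nat) \<Rightarrow> nat \<Rightarrow> bool" where
  "loses_extendibility g \<rho> n \<longleftrightarrow> (\<exists>L x. build g \<rho> n = Some L \<and> extendible g L \<and> nth_admissible g L (\<rho> n) = Some x \<and> dead_end g L x)"

lemma not_extendible_imp_loses_extendibility: "build g \<rho> n = Some L \<Longrightarrow> \<not> extendible g L \<Longrightarrow> \<exists>n'<n. loses_extendibility g \<rho> n'"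
proof (induction n arbitrary: L)
  case 0 then show ?case using extendible_Nil by simp
next
  case (Suc n)
  then obtain L0 x where L0: "build g \<rho> n = Some L0" "nth_admissible g L0 (\<rho> n) = Some x" "L = x # L0"
    by (auto simp: build_Suc_eq_Some)
  show ?case
  proof (cases "extendible g L0")
    case True
    have "dead_end g L0 x" using nth_admissible_SomeD[OF L0(2)] Suc.prems L0(3) unfolding dead_end_def by blast
    then have "loses_extendibility g \<rho> n" unfolding loses_extendibility_def using L0 True by blast
    then show ?thesis by blast
  next
    case False
    then show ?thesis using Suc.IH[OF L0(1)] less_Suc_eq by blast
  qed
qed

lemma picks_dead_end_imp_loses_extendibility: "picks_dead_end g \<rho> n \<Longrightarrow> \<exists>n'\<le>n. loses_extendibility g \<rho> n'"
proof -
  assume "picks_dead_end g \<rho> n"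
  then obtain L x where L: "build g \<rho> n = Some L" "nth_admissible g L (\<rho> n) = Some x" "dead_end g L x"
    unfolding picks_dead_end_def by blast
  show ?thesis
  proof (cases "extendible g L")
    case True then show ?thesis using L unfolding loses_extendibility_def by blast
  next
    case False then show ?thesis using not_extendible_imp_loses_extendibility[OF L(1)] by (meson less_imp_le)
  qed
qed

definition dead_end_values :: "(nat \<Rightarrow> nat \<Rightarrow> nat) \<Rightarrow> nat \<Rightarrow> nat \<Rightarrow> nat \<Rightarrow> nat \<Rightarrow> bool list \<Rightarrow> nat set" where
  "dead_end_values g c k i n \<tau> = {r. \<exists>L x. build g (oracle_choice (bits_of_string \<tau>) c k i) n = Some L \<and> extendible g L \<and> nth_admissible g L r = Some x \<and> dead_end g L x}"

lemma dead_end_values_card: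
  assumes kb: "k_bounded k g"
  shows "finite (dead_end_values g c k i n \<tau>) \<and> card (dead_end_values g c k i n \<tau>) \<le> n * k"
proof (cases "\<exists>L. build g (oracle_choice (bits_of_string \<tau>) c k i) n = Some L \<and> extendible g L")
  case True
  then obtain L where L: "build g (oracle_choice (bits_of_string \<tau>) c k i) n = Some L" "extendible g L" by blast
  have sub: "dead_end_values g c k i n \<tau> \<subseteq> rank g L ` {x. dead_end g L x}"
  proof
    fix r assume "r \<in> dead_end_values g c k i n \<tau>"
    then obtain x where "nth_admissible g L r = Some x" "dead_end g L x" unfolding dead_end_values_def using L(1) by auto
    then show "r \<in> rank g L ` {x. dead_end g L x}" using nth_admissible_SomeD by force
  qed
  have fb: "finite {x. dead_end g L x}" "card {x. dead_end g L x} \<le> length L * k"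
    using finite_dead_ends[OF kb L(2)] by auto
  have "finite (dead_end_values g c k i n \<tau>)" using sub fb(1) finite_subset by blast
  moreover have "card (dead_end_values g c k i n \<tau>) \<le> card {x. dead_end g L x}"
    using card_mono[OF finite_imageI[OF fb(1)] sub] card_image_le[OF fb(1), of "rank g L"] by linarith
  ultimately show ?thesis using fb(2) length_build[OF L(1)] by simp
next
  case False
  then have "dead_end_values g c k i n \<tau> = {}" unfolding dead_end_values_def by blast
  then show ?thesis by simp
qed

text \<open>Whether step n of the construction for coloring i loses extendibility depends only on the
  bits of Y before block prod_encode (i, n) and on that block, which gives the following cover.\<close>

definition dead_end_cover :: "(nat \<Rightarrow> nat \<Rightarrow> nat \<Rightarrow> nat) \<Rightarrow> nat \<Rightarrow> nat \<Rightarrow> nat \<Rightarrow> (nat \<Rightarrow> bool) set" where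
  "dead_end_cover G c k b = (\<Union>\<tau>\<in>{\<tau>. length \<tau> = block_start c k b}. \<Union>\<rho>\<in>{\<rho>. length \<rho> = block_len c k b \<and> bits_value \<rho> \<in> dead_end_values (G (pair_fst b)) c k (pair_fst b) (pair_snd b) \<tau>}. cyl (\<tau> @ \<rho>))"

lemma loses_extendibility_in_cover:
  assumes "loses_extendibility (G i) (oracle_choice Y c k i) n"
  shows "Y \<in> dead_end_cover G c k (prod_encode (i, n))"
proof -
  let ?b = "prod_encode (i, n)"
  let ?a = "block_start c k ?b" and ?l = "block_len c k ?b"
  let ?\<tau> = "map Y [0..<?a]" and ?\<rho> = "map Y [?a..<?a + ?l]"
  have agree: "oracle_choice Y c k i n' = oracle_choice (bits_of_string ?\<tau>) c k i n'" if "n' < n" for n'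
  proof -
    have le: "block_start c k (prod_encode (i, n')) + block_len c k (prod_encode (i, n')) \<le> ?a"
      using block_end_le_start prod_encode_strict_mono[OF that] by blast
    show ?thesis unfolding oracle_choice_def block_value_def oracle_bit_def
      by (intro sum.cong refl) (use le in \<open>auto simp: bits_of_string_def\<close>)
  qed
  have run_eq: "build (G i) (oracle_choice Y c k i) n = build (G i) (oracle_choice (bits_of_string ?\<tau>) c k i) n"
    by (rule build_cong) (use agree in blast)
  have "oracle_choice Y c k i n \<in> dead_end_values (G i) c k i n ?\<tau>"
    using assms run_eq unfolding loses_extendibility_def dead_end_values_def by auto
  moreover have "bits_value ?\<rho> = oracle_choice Y c k i n" by (simp add: oracle_choice_eq_bits_value)
  ultimately have h2: "?\<rho> \<in> {\<rho>. length \<rho> = block_len c k ?b \<and> bits_value \<rho> \<in> dead_end_values (G (pair_fst ?b)) c k (pair_fst ?b) (pair_snd ?b) ?\<tau>}"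
    by simp
  have h1: "?\<tau> \<in> {\<tau>. length \<tau> = block_start c k ?b}" by simp
  have yc: "Y \<in> cyl (?\<tau> @ ?\<rho>)" unfolding cyl_def by (auto simp: nth_append)
  show ?thesis unfolding dead_end_cover_def by (rule UN_I[OF h1], rule UN_I[OF h2], rule yc)
qed

lemma pair_snd_le: "pair_snd b \<le> b"
proof -
  obtain u v where "prod_decode b = (u, v)" by (cases "prod_decode b")
  then have "b = prod_encode (u, v)" "pair_snd b = v" by (metis prod_decode_inverse, simp add: pair_snd_def)
  then show ?thesis using le_prod_encode_2[of v u] by simp
qed

text \<open>This is where the choice of block lengths pays off: at most n k of the 2^(c + 2b + k + 1)
  values of block b lead to a dead end, and n \<le> b.\<close>

lemma dead_end_ratio_le:
  assumes "n \<le> b"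
  shows "real (n * k) * (1/2) ^ block_len c k b \<le> (1/2) ^ c * (1/2) ^ Suc b"
proof -
  have "n * k \<le> 2 ^ b * 2 ^ k"
    by (intro mult_le_mono) (use assms less_exp[of b] less_exp[of k] in linarith)+
  then have "real (n * k) \<le> real (2 ^ (b + k))" by (simp only: of_nat_le_iff power_add)
  then have "real (n * k) \<le> 2 ^ (b + k)" by simp
  then have "real (n * k) * (1/2) ^ block_len c k b \<le> 2 ^ (b + k) * (1/2) ^ block_len c k b"
    by (rule mult_right_mono) simp
  also have "\<dots> = (1/2) ^ c * (1/2) ^ Suc b"
    by (simp add: block_len_def power_add power_mult power2_eq_square field_simps)
  finally show ?thesis .
qed

lemma dead_end_cover_measure:
  assumes kb: "\<And>i. k_bounded k (G i)"
  shows "dead_end_cover G c k b \<in> sets cantor"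
    and "emeasure cantor (dead_end_cover G c k b) \<le> ennreal ((1/2) ^ c * (1/2) ^ Suc b)"
proof -
  note cover = emeasure_block_cover_le[where R = "dead_end_values (G (pair_fst b)) c k (pair_fst b) (pair_snd b)"
      and N = "pair_snd b * k" and a = "block_start c k b" and l = "block_len c k b", OF dead_end_values_card[OF kb]]
  show "dead_end_cover G c k b \<in> sets cantor" unfolding dead_end_cover_def by (rule cover(1))
  have "emeasure cantor (dead_end_cover G c k b) \<le> ennreal (real (pair_snd b * k) * (1/2) ^ block_len c k b)"
    unfolding dead_end_cover_def by (rule cover(2))
  also have "\<dots> \<le> ennreal ((1/2) ^ c * (1/2) ^ Suc b)"
    by (intro ennreal_leI dead_end_ratio_le pair_snd_le)
  finally show "emeasure cantor (dead_end_cover G c k b) \<le> ennreal ((1/2) ^ c * (1/2) ^ Suc b)" .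
qed

lemma emeasure_dead_end_covers:
  assumes kb: "\<And>i. k_bounded k (G i)"
  shows "emeasure cantor (\<Union>b. dead_end_cover G c k b) \<le> ennreal ((1/2) ^ c)"
proof -
  have "emeasure cantor (\<Union>b. dead_end_cover G c k b) \<le> (\<Sum>b. emeasure cantor (dead_end_cover G c k b))"
    by (rule emeasure_subadditive_countably) (use dead_end_cover_measure[OF kb] in auto)
  also have "\<dots> \<le> (\<Sum>b. ennreal ((1/2) ^ c * (1/2) ^ Suc b))"
    by (rule suminf_le) (use dead_end_cover_measure[OF kb] in auto)
  also have "\<dots> = ennreal (\<Sum>b. (1/2) ^ c * (1/2) ^ Suc b)"
    by (rule suminf_ennreal2) (use summable_ignore_initial_segment[OF summable_geometric[of "1/2::real"], of 1] in \<open>auto intro!: summable_mult simp del: power_Suc\<close>)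
  also have "(\<Sum>b. (1/2::real) ^ c * (1/2) ^ Suc b) = (1/2) ^ c"
  proof -
    have one: "(\<Sum>b. (1/2::real) ^ Suc b) = 1" by (rule sums_unique[OF power_half_series, symmetric])
    have sm: "summable (\<lambda>b. (1/2::real) ^ Suc b)" by (rule sums_summable[OF power_half_series])
    show ?thesis using suminf_mult[OF sm, of "(1/2)^c"] one by simp
  qed
  finally show ?thesis .
qed

section \<open>The Martin-Loef test\<close>

text \<open>The colorings are only specified, and only computed by the given program, on pairs x < y;
  padding them makes them total without changing their values there.\<close>

definition padded_coloring :: "(nat \<Rightarrow> nat \<Rightarrow> nat \<Rightarrow> nat) \<Rightarrow> nat \<Rightarrow> nat \<Rightarrow> nat \<Rightarrow> nat" where
  "padded_coloring f i a y = f i a (max y (Suc a))"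

lemma computable_padded_coloring:
  "computable_coloring_seq f \<Longrightarrow> computable A 3 (\<lambda>xs. padded_coloring f (xs!0) (xs!1) (xs!2))"
  unfolding padded_coloring_def by (rule computable_coloring_seq_padded)

lemma padded_coloring_eq: "a < y \<Longrightarrow> padded_coloring f i a y = f i a y"
  by (simp add: padded_coloring_def max_absorb1 Suc_leI)

lemma k_bounded_padded_coloring: "k_bounded k (f i) \<Longrightarrow> k_bounded k (padded_coloring f i)"
proof -
  have "{(x, y). x < y \<and> padded_coloring f i x y = c} = {(x, y). x < y \<and> f i x y = c}" for c
    by (auto simp: padded_coloring_eq)
  then show "k_bounded k (f i) \<Longrightarrow> k_bounded k (padded_coloring f i)" unfolding k_bounded_def by simp
qed

lemma rainbow_padded_coloring: "rainbow (padded_coloring f i) S \<Longrightarrow> rainbow (f i) S"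
  unfolding rainbow_def by (metis padded_coloring_eq)

definition string_bit :: "nat \<Rightarrow> nat \<Rightarrow> nat" where
  "string_bit s j = of_bool (j < code_length s \<and> code_nth s j = 1)"

lemma string_bit_str_code: "string_bit (str_code \<sigma>) j = of_bool (j < length \<sigma> \<and> \<sigma> ! j)"
  by (cases "j < length \<sigma>") (auto simp: string_bit_def str_code_def code_length_eq code_nth_eq)

lemma computable_string_bit: "computable A 2 (\<lambda>xs. string_bit (xs!0) (xs!1))"
  unfolding string_bit_def by (intro computable_intros3; simp)

lemma block_value_string_bit_eq_oracle_choice:
  assumes "Y \<in> cyl \<sigma>" "block_start c k (prod_encode (i, n)) + block_len c k (prod_encode (i, n)) \<le> length \<sigma>"
    and "n' \<le> n"
  shows "block_value string_bit (str_code \<sigma>) c k i n' = oracle_choice Y c k i n'"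
  unfolding oracle_choice_def
  by (rule block_value_cong[OF _ assms(3)]) (use assms(1,2) in \<open>auto simp: string_bit_str_code oracle_bit_def cyl_def\<close>)

text \<open>A witness that the finite string s shows the construction for coloring i to pick a dead end
  at step n: the first n steps (searching below t) are determined by s and produce a list L coded
  by z - 1, the next pick x is also found below t, and by the halting problem x # L has no
  admissible extension above m.\<close>

definition test_witness :: "nat \<Rightarrow> (nat \<Rightarrow> nat \<Rightarrow> nat \<Rightarrow> nat) \<Rightarrow> nat \<Rightarrow> nat \<Rightarrow> nat \<Rightarrow> nat \<Rightarrow> nat \<Rightarrow> nat \<Rightarrow> nat \<Rightarrow> bool"
  where
  "test_witness EH f k c s i n t m \<longleftrightarrow>
     (let z = build_code (padded_coloring f) string_bit k n c i t s;
          x = choose_code (padded_coloring f) i (z - 1) (block_value string_bit s c k i n) t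
      in block_start c k (prod_encode (i, n)) + block_len c k (prod_encode (i, n)) \<le> code_length s \<and>
         z \<noteq> 0 \<and> x < t \<and> \<not> halting (query_code EH (prod_encode (i, prod_encode (Suc (prod_encode (x, z - 1)), m)))))"

definition dead_end_test :: "nat \<Rightarrow> (nat \<Rightarrow> nat \<Rightarrow> nat \<Rightarrow> nat) \<Rightarrow> nat \<Rightarrow> nat \<Rightarrow> bool list \<Rightarrow> bool" where
  "dead_end_test EH f k c \<sigma> \<longleftrightarrow> (\<exists>i n t m. test_witness EH f k c (str_code \<sigma>) i n t m)"

lemma ce_rel_strings_dead_end_test:
  assumes "computable_coloring_seq f"
  shows "ce_rel_strings halting (dead_end_test EH f k)"
proof -
  note G = computable_padded_coloring[OF assms, of halting]
  define T where "T c s w \<longleftrightarrow>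
    test_witness EH f k c s (pair_fst (pair_fst w)) (pair_snd (pair_fst w)) (pair_fst (pair_snd w)) (pair_snd (pair_snd w))"
    for c s w
  have "decidable halting 3 (\<lambda>xs. \<not> T (xs!1) (xs!2) (xs!0))"
    unfolding T_def test_witness_def Let_def query_code_def block_len_def block_start_def
    by (intro computable_intros3 computable_build_code[OF G computable_string_bit] computable_choose_code[OF G]
        computable_block_value[OF computable_string_bit]; simp)
  then have "ce_rel_strings halting (\<lambda>c \<sigma>. \<exists>w. T c (str_code \<sigma>) w)"
    by (rule ce_rel_strings_exists)
  moreover have "(\<exists>w. T c s w) \<longleftrightarrow> (\<exists>i n t m. test_witness EH f k c s i n t m)" for c s
    unfolding T_def by (metis pair_fst_encode pair_snd_encode)
  ultimately show ?thesis unfolding dead_end_test_def by simp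
qed

context
  fixes f :: "nat \<Rightarrow> nat \<Rightarrow> nat \<Rightarrow> nat" and k EH :: nat
  assumes EH: "\<forall>P. halting (query_code EH P) \<longleftrightarrow> (\<exists>y. query_holds (padded_coloring f) P y)"
begin

lemma halting_query_extension:
  "halting (query_code EH (prod_encode (i, prod_encode (Suc (prod_encode (x, list_encode L)), m))))
     \<longleftrightarrow> (\<exists>y. m < y \<and> admissible (padded_coloring f i) (x # L) y)"
proof -
  have "Suc (prod_encode (x, list_encode L)) = list_encode (x # L)" by simp
  then show ?thesis using EH unfolding query_holds_def by (simp only: pair_fst_encode pair_snd_encode admissible_code_eq)
qed

lemma test_witness_imp_picks_dead_end:
  assumes Y: "Y \<in> cyl \<sigma>" and T: "test_witness EH f k c (str_code \<sigma>) i n t m"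
  shows "picks_dead_end (padded_coloring f i) (oracle_choice Y c k i) n"
proof -
  define s where "s = str_code \<sigma>"
  let ?z = "build_code (padded_coloring f) string_bit k n c i t s"
  let ?r = "block_value string_bit s c k i n"
  have T': "block_start c k (prod_encode (i, n)) + block_len c k (prod_encode (i, n)) \<le> length \<sigma>"
    "?z \<noteq> 0" "choose_code (padded_coloring f) i (?z - 1) ?r t < t"
    "\<not> halting (query_code EH (prod_encode (i, prod_encode (Suc (prod_encode (choose_code (padded_coloring f) i (?z - 1) ?r t, ?z - 1)), m))))"
    using T unfolding test_witness_def Let_def s_def[symmetric] by (auto simp: s_def str_code_def code_length_eq)
  have choice_eq: "block_value string_bit s c k i n' = oracle_choice Y c k i n'" if "n' \<le> n" for n'
    unfolding s_def by (rule block_value_string_bit_eq_oracle_choice[OF Y T'(1) that])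
  have "build_below (padded_coloring f i) (block_value string_bit s c k i) t n
      = build_below (padded_coloring f i) (oracle_choice Y c k i) t n"
    by (rule build_below_cong) (use choice_eq in auto)
  then obtain L where L: "build_below (padded_coloring f i) (oracle_choice Y c k i) t n = Some L"
      "?z = Suc (list_encode L)"
    using T'(2) unfolding build_code_eq option_code_def by (auto split: option.splits)
  define x where "x = choose_code (padded_coloring f) i (list_encode L) ?r t"
  have "nth_admissible_below (padded_coloring f i) L ?r t = Some x"
    using T'(3) unfolding nth_admissible_below_code x_def L(2) by simp
  then have pick: "nth_admissible (padded_coloring f i) L (oracle_choice Y c k i n) = Some x"
    using choice_eq[of n] nth_admissible_below_eq_Some nth_admissible_eq_Some by auto
  have "\<not> (\<exists>y. m < y \<and> admissible (padded_coloring f i) (x # L) y)"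
    using T'(4) halting_query_extension unfolding L(2) x_def by simp
  then have "{y. admissible (padded_coloring f i) (x # L) y} \<subseteq> {..m}" using not_less by blast
  then have "\<not> extendible (padded_coloring f i) (x # L)" unfolding extendible_def using finite_subset by blast
  then have "dead_end (padded_coloring f i) L x" unfolding dead_end_def using nth_admissible_SomeD[OF pick] by blast
  moreover have "build (padded_coloring f i) (oracle_choice Y c k i) n = Some L" by (rule build_below_imp_build[OF L(1)])
  ultimately show ?thesis unfolding picks_dead_end_def using pick by blast
qed

lemma picks_dead_end_imp_test_witness:
  assumes "picks_dead_end (padded_coloring f i) (oracle_choice Y c k i) n"
  shows "\<exists>\<sigma>. Y \<in> cyl \<sigma> \<and> dead_end_test EH f k c \<sigma>"
proof -
  obtain L x where L: "build (padded_coloring f i) (oracle_choice Y c k i) n = Some L"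
    "nth_admissible (padded_coloring f i) L (oracle_choice Y c k i n) = Some x"
    "dead_end (padded_coloring f i) L x"
    using assms unfolding picks_dead_end_def by blast
  have "finite {y. admissible (padded_coloring f i) (x # L) y}" using L(3) unfolding dead_end_def extendible_def by blast
  then obtain m where m: "\<forall>y. admissible (padded_coloring f i) (x # L) y \<longrightarrow> y \<le> m"
    using finite_nat_set_iff_bounded_le by auto
  define t where "t = Suc (Max (set (x # L)))"
  have below_t: "\<forall>a\<in>set (x # L). a < t" unfolding t_def by (simp add: le_imp_less_Suc)
  define \<sigma> where "\<sigma> = map Y [0..<block_start c k (prod_encode (i, n)) + block_len c k (prod_encode (i, n))]"
  define s where "s = str_code \<sigma>"
  have Y: "Y \<in> cyl \<sigma>" unfolding \<sigma>_def cyl_def by simp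
  have choice_eq: "block_value string_bit s c k i n' = oracle_choice Y c k i n'" if "n' \<le> n" for n'
    unfolding s_def by (rule block_value_string_bit_eq_oracle_choice[OF Y _ that]) (simp add: \<sigma>_def)
  have "build_below (padded_coloring f i) (block_value string_bit s c k i) t n
      = build_below (padded_coloring f i) (oracle_choice Y c k i) t n"
    by (rule build_below_cong) (use choice_eq in auto)
  also have "\<dots> = Some L" by (rule build_imp_build_below[OF L(1)]) (use below_t in auto)
  finally have z: "build_code (padded_coloring f) string_bit k n c i t s = Suc (list_encode L)"
    unfolding build_code_eq option_code_def by simp
  have "nth_admissible_below (padded_coloring f i) L (oracle_choice Y c k i n) t = Some x"
    using L(2) below_t nth_admissible_below_eq_Some nth_admissible_eq_Some by auto
  then have x: "choose_code (padded_coloring f) i (list_encode L) (block_value string_bit s c k i n) t = x \<and> x < t"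
    unfolding nth_admissible_below_code choice_eq[OF le_refl] by (auto split: if_splits)
  have "\<not> halting (query_code EH (prod_encode (i, prod_encode (Suc (prod_encode (x, list_encode L)), m))))"
    using m halting_query_extension by (auto simp: not_less[symmetric])
  moreover have "code_length s = block_start c k (prod_encode (i, n)) + block_len c k (prod_encode (i, n))"
    by (simp add: s_def \<sigma>_def str_code_def code_length_eq)
  ultimately have "test_witness EH f k c s i n t m"
    unfolding test_witness_def Let_def using x z by simp
  then show ?thesis using Y unfolding dead_end_test_def s_def by blast
qed

lemma open_class_dead_end_test_iff:
  "Y \<in> open_class (dead_end_test EH f k c) \<longleftrightarrow> (\<exists>i n. picks_dead_end (padded_coloring f i) (oracle_choice Y c k i) n)"
proof
  assume "Y \<in> open_class (dead_end_test EH f k c)"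
  then obtain \<sigma> where Y: "Y \<in> cyl \<sigma>" and "dead_end_test EH f k c \<sigma>" unfolding open_class_def by auto
  then obtain i n t m where "test_witness EH f k c (str_code \<sigma>) i n t m"
    unfolding dead_end_test_def by auto
  then show "\<exists>i n. picks_dead_end (padded_coloring f i) (oracle_choice Y c k i) n"
    using test_witness_imp_picks_dead_end[OF Y] by (intro exI)
next
  assume "\<exists>i n. picks_dead_end (padded_coloring f i) (oracle_choice Y c k i) n"
  then obtain i n where "picks_dead_end (padded_coloring f i) (oracle_choice Y c k i) n" by blast
  then obtain \<sigma> where "Y \<in> cyl \<sigma>" "dead_end_test EH f k c \<sigma>"
    using picks_dead_end_imp_test_witness by blast
  then show "Y \<in> open_class (dead_end_test EH f k c)" unfolding open_class_def by auto
qed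

lemma emeasure_dead_end_test:
  assumes "\<forall>i. k_bounded k (f i)"
  shows "emeasure cantor (open_class (dead_end_test EH f k c)) \<le> ennreal ((1/2) ^ c)"
proof -
  have kb: "k_bounded k (padded_coloring f i)" for i using assms k_bounded_padded_coloring by blast
  have "open_class (dead_end_test EH f k c) \<subseteq> (\<Union>b. dead_end_cover (padded_coloring f) c k b)"
  proof
    fix Y assume "Y \<in> open_class (dead_end_test EH f k c)"
    then obtain i n where "picks_dead_end (padded_coloring f i) (oracle_choice Y c k i) n"
      unfolding open_class_dead_end_test_iff by blast
    then obtain n' where "loses_extendibility (padded_coloring f i) (oracle_choice Y c k i) n'"
      using picks_dead_end_imp_loses_extendibility by blast
    then have "Y \<in> dead_end_cover (padded_coloring f) c k (prod_encode (i, n'))"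
      by (rule loses_extendibility_in_cover)
    then show "Y \<in> (\<Union>b. dead_end_cover (padded_coloring f) c k b)" by blast
  qed
  moreover have "(\<Union>b. dead_end_cover (padded_coloring f) c k b) \<in> sets cantor"
    by (intro sets.countable_UN) (use dead_end_cover_measure(1)[OF kb] in auto)
  ultimately have "emeasure cantor (open_class (dead_end_test EH f k c))
      \<le> emeasure cantor (\<Union>b. dead_end_cover (padded_coloring f) c k b)"
    by (rule emeasure_mono)
  also have "\<dots> \<le> ennreal ((1/2) ^ c)" by (rule emeasure_dead_end_covers[OF kb])
  finally show ?thesis .
qed

end

lemma computable_set_seq_in_by_search:
  assumes P: "decidable (\<lambda>m. m \<in> X) 3 (\<lambda>xs. P (xs!0) (xs!1) (xs!2))"
    and V: "computable (\<lambda>m. m \<in> X) 3 (\<lambda>xs. V (xs!0) (xs!1) (xs!2))"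
    and ex: "\<And>i a. \<exists>t. P i a t"
    and val: "\<And>i a t. P i a t \<Longrightarrow> V i a t = of_bool (a \<in> S i)"
  shows "computable_set_seq_in X S"
proof -
  let ?A = "\<lambda>m. m \<in> X"
  define F :: "nat list \<Rightarrow> nat" where "F xs = of_bool (\<not> P (xs!1) (xs!2) (xs!0))" for xs
  have "computable ?A 3 F"
    unfolding F_def using decidable_not[OF P] unfolding decidable_def
    by (rule computable_apply3) (auto intro: computable_proj)
  then obtain q1 where q1: "\<forall>xs. length xs = Suc 2 \<longrightarrow> evalr ?A q1 xs (F xs)"
    unfolding computable_def by (auto simp: numeral_eq_Suc)
  obtain q2 where q2: "\<forall>xs. length xs = 3 \<longrightarrow> evalr ?A q2 xs (V (xs!0) (xs!1) (xs!2))"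
    using V unfolding computable_def by blast
  show ?thesis unfolding computable_set_seq_in_def
  proof (intro exI[of _ "Comp q2 [Proj 0, Proj 1, Mn q1]"] allI)
    fix i a
    define ts where "ts = (LEAST t. F (t # [i, a]) = 0)"
    obtain t where "P i a t" using ex by blast
    then have t: "F (t # [i, a]) = 0" by (simp add: F_def)
    then have search: "evalr ?A (Mn q1) [i, a] ts" unfolding ts_def by (rule evalr_Mn_Least[OF q1, rotated]) simp
    have "F (ts # [i, a]) = 0" unfolding ts_def using t by (rule LeastI)
    then have membership: "V i a ts = of_bool (a \<in> S i)" by (intro val) (simp add: F_def)
    have "list_all2 (\<lambda>g. evalr ?A g [i, a]) [Proj 0, Proj 1, Mn q1] [i, a, ts]"
      using evalr.ev_Proj[of ?A 0 "[i, a]"] evalr.ev_Proj[of ?A 1 "[i, a]"] search by simp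
    moreover have "evalr ?A q2 [i, a, ts] (V i a ts)"
      using q2[rule_format, of "[i, a, ts]"] by (simp add: numeral_2_eq_2)
    ultimately have "evalr ?A (Comp q2 [Proj 0, Proj 1, Mn q1]) [i, a] (V i a ts)"
      by (rule evalr.ev_Comp)
    then show "evalr ?A (Comp q2 [Proj 0, Proj 1, Mn q1]) [i, a] (if a \<in> S i then 1 else 0)"
      using membership by (simp add: of_bool_def)
  qed
qed

text \<open>Membership of a is decided by running the first Suc a steps of the construction, searching
  for a bound t below which all of its picks are found.\<close>

lemma computable_built_sets:
  assumes cc: "computable_coloring_seq f"
    and nf: "\<And>i. \<forall>n. \<not> picks_dead_end (padded_coloring f i) (oracle_choice (\<lambda>m. m \<in> X) c k i) n"
  shows "computable_set_seq_in X (\<lambda>i. built_set (padded_coloring f i) (oracle_choice (\<lambda>m. m \<in> X) c k i))"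
proof -
  let ?A = "\<lambda>m. m \<in> X"
  let ?G = "padded_coloring f" and ?\<beta> = "oracle_bit ?A"
  have G: "computable ?A 3 (\<lambda>xs. ?G (xs!0) (xs!1) (xs!2))" by (rule computable_padded_coloring[OF cc])
  have "decidable ?A 2 (\<lambda>xs. ?A (xs!1))" by (rule decidable_orc, rule computable_proj) simp
  then have \<beta>: "computable ?A 2 (\<lambda>xs. ?\<beta> (xs!0) (xs!1))" unfolding oracle_bit_def decidable_def by simp
  have choice: "block_value ?\<beta> 0 c k i = oracle_choice ?A c k i" for i
    by (rule ext) (simp add: oracle_choice_def)
  define z where "z i a t = build_code ?G ?\<beta> k (Suc a) c i t 0" for i a t
  show ?thesis
  proof (rule computable_set_seq_in_by_search[where P = "\<lambda>i a t. z i a t \<noteq> 0"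
        and V = "\<lambda>i a t. of_bool (\<exists>j<code_length (z i a t - 1). code_nth (z i a t - 1) j = a)"])
    show "decidable ?A 3 (\<lambda>xs. z (xs!0) (xs!1) (xs!2) \<noteq> 0)"
      unfolding z_def by (intro computable_intros3 computable_build_code[OF G \<beta>]; simp)
    show "computable ?A 3 (\<lambda>xs. of_bool (\<exists>j<code_length (z (xs!0) (xs!1) (xs!2) - 1).
        code_nth (z (xs!0) (xs!1) (xs!2) - 1) j = xs!1))"
      unfolding z_def by (intro computable_intros3 computable_build_code[OF G \<beta>]; simp)
  next
    fix i a
    obtain L where L: "build (?G i) (oracle_choice ?A c k i) (Suc a) = Some L"
      using build_extendible_rainbow[OF nf[of i]] by blast
    define t where "t = Suc (Max (insert 0 (set L)))"
    have "build_below (?G i) (oracle_choice ?A c k i) t (Suc a) = Some L"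
      by (rule build_imp_build_below[OF L]) (auto simp: t_def le_imp_less_Suc)
    then have "z i a t \<noteq> 0" unfolding z_def build_code_eq choice option_code_def by simp
    then show "\<exists>t. z i a t \<noteq> 0" by blast
  next
    fix i a t assume "z i a t \<noteq> 0"
    then obtain L where L: "build_below (?G i) (oracle_choice ?A c k i) t (Suc a) = Some L"
        "z i a t = Suc (list_encode L)"
      unfolding z_def build_code_eq choice option_code_def by (auto split: option.splits)
    have "(\<exists>j<code_length (z i a t - 1). code_nth (z i a t - 1) j = a) \<longleftrightarrow> a \<in> set L"
      unfolding L(2) by (auto simp: code_length_eq code_nth_eq in_set_conv_nth)
    also have "\<dots> \<longleftrightarrow> a \<in> built_set (?G i) (oracle_choice ?A c k i)"
      using built_set_iff_build[OF build_below_imp_build[OF L(1)]] by simp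
    finally show "of_bool (\<exists>j<code_length (z i a t - 1). code_nth (z i a t - 1) j = a)
        = of_bool (a \<in> built_set (?G i) (oracle_choice ?A c k i))" by simp
  qed
qed

lemma mltest_dead_end_test:
  assumes "computable_coloring_seq f" "\<forall>i. k_bounded k (f i)"
    and "\<forall>P. halting (query_code EH P) \<longleftrightarrow> (\<exists>y. query_holds (padded_coloring f) P y)"
  shows "mltest halting (dead_end_test EH f k)"
  unfolding mltest_def
  using ce_rel_strings_dead_end_test[OF assms(1)] emeasure_dead_end_test[OF assms(3,2)] by blast

theorem theorem6p4:
  fixes k :: nat and X :: "nat set" and f :: "nat \<Rightarrow> nat \<Rightarrow> nat \<Rightarrow> nat"
  assumes "k \<ge> 1"
    and "two_random X"
    and "computable_coloring_seq f"
    and "\<forall>i. k_bounded k (f i)"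
  shows "\<exists>S :: nat \<Rightarrow> nat set. computable_set_seq_in X S \<and>
           (\<forall>i. infinite (S i) \<and> rainbow (f i) (S i))"
proof -
  obtain EH where EH: "\<forall>P. halting (query_code EH P) \<longleftrightarrow> (\<exists>y. query_holds (padded_coloring f) P y)"
    using halting_decides_queries[OF computable_padded_coloring[OF assms(3)]] by blast
  have "mltest halting (dead_end_test EH f k)" by (rule mltest_dead_end_test[OF assms(3,4) EH])
  then obtain c where "(\<lambda>m. m \<in> X) \<notin> open_class (dead_end_test EH f k c)"
    using assms(2) unfolding two_random_def mlrandom_rel_def by blast
  then have no_dead_end: "\<forall>n. \<not> picks_dead_end (padded_coloring f i) (oracle_choice (\<lambda>m. m \<in> X) c k i) n" for i
    using open_class_dead_end_test_iff[OF EH] by blast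
  define S where "S i = built_set (padded_coloring f i) (oracle_choice (\<lambda>m. m \<in> X) c k i)" for i
  have "computable_set_seq_in X S"
    unfolding S_def by (rule computable_built_sets[OF assms(3) no_dead_end])
  moreover have "infinite (S i) \<and> rainbow (f i) (S i)" for i
    using built_set_infinite_rainbow[OF no_dead_end] rainbow_padded_coloring unfolding S_def by blast
  ultimately show ?thesis by blast
qed

end
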